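(* Let $\beta>0$ and $s>2$, and let $G=G_{s,\beta}(N)$ be the random graph described in the context. Then there exists a constant $c=c(s,\beta)>0$, independent of $N$, such that $$\lim_{N\to\infty}\Pr\left[\tau(G)\ge cN^2\right]=1 .$$
   Context: Long-range percolation on the cycle: for a positive integer $N$, start with the cycle graph on vertex set $\mathbb{Z}/N\mathbb{Z}$ (edges between $x$ and $x+1$). For $x,y\in\mathbb{Z}/N\mathbb{Z}$ let $\|x-y\|=\min\{|x-y|,N-|x-y|\}$ (the cycle distance). For every pair $x\neq y$, independently, an edge between $x$ and $y$ is added with probability $1-\exp(-\beta\|x-y\|^{-s})$. The resulting random graph is $G_{s,\beta}(N)$. Edges are regarded as oriented: each undirected edge $\{x,y\}$ contributes both $(x,y)$ and $(y,x)$ to the edge set $E(G)$, and $\deg(x)$ is the degree of $x$. The random walk considered is the lazy random walk on $G$: transition matrix $P(x,y)=\frac{1}{2\deg(x)}$ if $x,y$ are adjacent and $P(x,x)=\frac12$. Its stationary distribution is $\pi(x)=\deg(x)/|E(G)|$. The variational distance at time $t$ from start $x$ is $\Delta_x(t)=\frac12\sum_{y\in V(G)}|P^t(x,y)-\pi(y)|$, where $P^t$ is the $t$-th power of $P$. Define $\tau_x(\varepsilon)=\min\{t:\ \Delta_x(t')\le\varepsilon \text{ for all } t'\ge t\}$ and the mixing time $\tau(G)=\max_{x\in V(G)}\tau_x(1/4)$. *)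

theory Defs
  imports "HOL-Analysis.Analysis"
begin

text \<open>Vertices of the cycle Z/NZ are represented by the naturals 0..N-1.\<close>

definition cdist :: "nat \<Rightarrow> nat \<Rightarrow> nat \<Rightarrow> nat" where
  "cdist N x y = min (if x \<le> y then y - x else x - y) (N - (if x \<le> y then y - x else x - y))"

text \<open>Unordered pairs {x,y}, x \<noteq> y, encoded as (x,y) with x < y.\<close>
definition vpairs :: "nat \<Rightarrow> (nat \<times> nat) set" where
  "vpairs N = {(x, y). x < y \<and> y < N}"

definition edge_prob :: "real \<Rightarrow> real \<Rightarrow> nat \<Rightarrow> nat \<times> nat \<Rightarrow> real" where
  "edge_prob s \<beta> N e = 1 - exp (- \<beta> * (real (cdist N (fst e) (snd e))) powr (- s))"

text \<open>Probability of an event (set of realisations S of added long-range edges) under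
  independent edges: S ranges over subsets of vpairs N.\<close>
definition graph_prob :: "real \<Rightarrow> real \<Rightarrow> nat \<Rightarrow> (nat \<times> nat) set set \<Rightarrow> real" where
  "graph_prob s \<beta> N A =
     (\<Sum>S\<in>Pow (vpairs N) \<inter> A.
        \<Prod>e\<in>vpairs N. (if e \<in> S then edge_prob s \<beta> N e else 1 - edge_prob s \<beta> N e))"

definition adj :: "nat \<Rightarrow> (nat \<times> nat) set \<Rightarrow> nat \<Rightarrow> nat \<Rightarrow> bool" where
  "adj N S x y \<longleftrightarrow> x < N \<and> y < N \<and> x \<noteq> y \<and>
     (cdist N x y = 1 \<or> (min x y, max x y) \<in> S)"

definition deg :: "nat \<Rightarrow> (nat \<times> nat) set \<Rightarrow> nat \<Rightarrow> nat" where
  "deg N S x = card {y. y < N \<and> adj N S x y}"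

definition lazyP :: "nat \<Rightarrow> (nat \<times> nat) set \<Rightarrow> nat \<Rightarrow> nat \<Rightarrow> real" where
  "lazyP N S x y = (if x = y then 1/2
                    else if adj N S x y then 1 / (2 * real (deg N S x)) else 0)"

fun lazyPt :: "nat \<Rightarrow> (nat \<times> nat) set \<Rightarrow> nat \<Rightarrow> nat \<Rightarrow> nat \<Rightarrow> real" where
  "lazyPt N S 0 x y = (if x = y then 1 else 0)"
| "lazyPt N S (Suc t) x y = (\<Sum>z<N. lazyPt N S t x z * lazyP N S z y)"

text \<open>Stationary distribution deg(x)/|E(G)|, with |E(G)| = number of oriented edges.\<close>
definition stat :: "nat \<Rightarrow> (nat \<times> nat) set \<Rightarrow> nat \<Rightarrow> real" where
  "stat N S y = real (deg N S y) / real (\<Sum>z<N. deg N S z)"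

definition var_dist :: "nat \<Rightarrow> (nat \<times> nat) set \<Rightarrow> nat \<Rightarrow> nat \<Rightarrow> real" where
  "var_dist N S x t = (1/2) * (\<Sum>y<N. \<bar>lazyPt N S t x y - stat N S y\<bar>)"

definition tau_x :: "nat \<Rightarrow> (nat \<times> nat) set \<Rightarrow> nat \<Rightarrow> real \<Rightarrow> nat" where
  "tau_x N S x \<epsilon> = (LEAST t. \<forall>t'\<ge>t. var_dist N S x t' \<le> \<epsilon>)"

definition mixing_time :: "nat \<Rightarrow> (nat \<times> nat) set \<Rightarrow> nat" where
  "mixing_time N S = Max ((\<lambda>x. tau_x N S x (1/4)) ` {..<N})"

end

theory Submission
  imports Defs "HOL-Real_Asymp.Real_Asymp"
begin

text \<open>
  Let \<open>L = N div 8\<close> and call the cut between \<open>k\<close> and \<open>k + 1\<close> good if every long-range edge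
  across it joins \<open>[0, L)\<close> to \<open>[6L, N)\<close>. For \<open>s > 2\<close> the total weight of the edges that could
  spoil a cut is bounded, so each cut is good with probability bounded away from \<open>0\<close>, and a
  second moment estimate shows that with high probability linearly many cuts in \<open>[L, 2L)\<close> and in
  \<open>[5L, 6L)\<close> are good, while there are only linearly many edges.

  On such a graph the function that climbs from \<open>-1\<close> to \<open>1\<close> across the good cuts of \<open>[L, 2L)\<close>
  and descends again across those of \<open>[5L, 6L)\<close> is constant along long-range edges. Its
  Dirichlet energy is therefore \<open>O(N\<^sup>-\<^sup>2)\<close> while its stationary variance is bounded below. For the
  lazy reversible walk with mixing time \<open>T\<close>, every \<open>g\<close> with \<open>|g| \<le> 1\<close> satisfies
  \<open>Var(g) \<le> 2kT E(g) + 4 / 4\<^sup>k\<close>, and a fixed \<open>k\<close> yields \<open>T \<ge> c N\<^sup>2\<close>.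
\<close>

section \<open>Independent random subsets\<close>

lemma sum_Pow_prod:
  fixes h :: "'a \<Rightarrow> bool \<Rightarrow> 'b::comm_semiring_1"
  assumes "finite V"
  shows "(\<Sum>X\<in>Pow V. \<Prod>e\<in>V. h e (e \<in> X)) = (\<Prod>e\<in>V. h e True + h e False)"
proof -
  have "(\<Prod>e\<in>V. h e True + h e False) =
      (\<Sum>X\<in>Pow V. (\<Prod>e\<in>X. h e True) * (\<Prod>e\<in>V - X. h e False))"
    by (rule prod_add[OF assms])
  also have "\<dots> = (\<Sum>X\<in>Pow V. \<Prod>e\<in>V. h e (e \<in> X))"
  proof (rule sum.cong[OF refl])
    fix X assume X: "X \<in> Pow V"
    have "(\<Prod>e\<in>V. h e (e \<in> X)) = (\<Prod>e\<in>X. h e (e \<in> X)) * (\<Prod>e\<in>V - X. h e (e \<in> X))"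
      using prod.subset_diff[of X V "\<lambda>e. h e (e \<in> X)"] X assms by (auto simp: mult.commute)
    also have "\<dots> = (\<Prod>e\<in>X. h e True) * (\<Prod>e\<in>V - X. h e False)"
      by (auto intro!: arg_cong2[where f = "(*)"] prod.cong)
    finally show "(\<Prod>e\<in>X. h e True) * (\<Prod>e\<in>V - X. h e False) = (\<Prod>e\<in>V. h e (e \<in> X))" ..
  qed
  finally show ?thesis ..
qed

lemma prod_of_bool:
  "finite A \<Longrightarrow> (\<Prod>x\<in>A. of_bool (P x)) = (of_bool (\<forall>x\<in>A. P x) :: 'b::comm_semiring_1)"
  by (induction A rule: finite_induct) auto

text \<open>The law of a random subset of \<open>V\<close> that contains each \<open>e \<in> V\<close> independently with
  probability \<open>p e\<close>; \<^const>\<open>graph_prob\<close> is the case \<open>V = vpairs N\<close>.\<close>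

locale random_subset =
  fixes V :: "'a set" and p :: "'a \<Rightarrow> real"
  assumes finite_V: "finite V"
    and p_nonneg: "e \<in> V \<Longrightarrow> 0 \<le> p e" and p_le_1: "e \<in> V \<Longrightarrow> p e \<le> 1"
begin

definition weight :: "'a set \<Rightarrow> real" where
  "weight X = (\<Prod>e\<in>V. if e \<in> X then p e else 1 - p e)"

definition expectation :: "('a set \<Rightarrow> real) \<Rightarrow> real" where
  "expectation f = (\<Sum>X\<in>Pow V. weight X * f X)"

definition prob :: "'a set set \<Rightarrow> real" where
  "prob A = expectation (\<lambda>X. of_bool (X \<in> A))"

lemma weight_nonneg: "0 \<le> weight X"
  unfolding weight_def using p_nonneg p_le_1 by (intro prod_nonneg) auto

lemma expectation_prod:
  "expectation (\<lambda>X. \<Prod>e\<in>V. if e \<in> X then a e else b e) = (\<Prod>e\<in>V. p e * a e + (1 - p e) * b e)"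
proof -
  let ?h = "\<lambda>e t. if t then p e * a e else (1 - p e) * b e"
  have "expectation (\<lambda>X. \<Prod>e\<in>V. if e \<in> X then a e else b e) = (\<Sum>X\<in>Pow V. \<Prod>e\<in>V. ?h e (e \<in> X))"
    unfolding expectation_def weight_def
    by (auto simp: prod.distrib[symmetric] intro!: sum.cong prod.cong)
  also have "\<dots> = (\<Prod>e\<in>V. p e * a e + (1 - p e) * b e)"
    using sum_Pow_prod[OF finite_V, of ?h] by simp
  finally show ?thesis .
qed

lemma expectation_cong: "(\<And>X. X \<subseteq> V \<Longrightarrow> f X = g X) \<Longrightarrow> expectation f = expectation g"
  unfolding expectation_def by (intro sum.cong) auto

lemma expectation_const [simp]: "expectation (\<lambda>_. c) = c"
  using expectation_prod[of "\<lambda>_. 1" "\<lambda>_. 1"] by (simp add: expectation_def sum_distrib_right[symmetric])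

lemma expectation_add: "expectation (\<lambda>X. f X + g X) = expectation f + expectation g"
  unfolding expectation_def by (simp add: distrib_left sum.distrib)

lemma expectation_diff: "expectation (\<lambda>X. f X - g X) = expectation f - expectation g"
  unfolding expectation_def by (simp add: right_diff_distrib sum_subtractf)

lemma expectation_mult_left: "expectation (\<lambda>X. c * f X) = c * expectation f"
  unfolding expectation_def by (simp add: sum_distrib_left mult_ac)

lemma expectation_sum: "expectation (\<lambda>X. \<Sum>i\<in>I. f i X) = (\<Sum>i\<in>I. expectation (f i))"
  unfolding expectation_def by (simp add: sum_distrib_left sum.swap[of _ I])

lemma expectation_mono: "(\<And>X. X \<subseteq> V \<Longrightarrow> f X \<le> g X) \<Longrightarrow> expectation f \<le> expectation g"
  unfolding expectation_def by (auto intro!: sum_mono mult_left_mono weight_nonneg)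

lemma prob_eq_sum: "prob A = (\<Sum>X\<in>Pow V \<inter> A. weight X)"
proof -
  have "prob A = (\<Sum>X\<in>Pow V. if X \<in> A then weight X else 0)"
    unfolding prob_def expectation_def by (auto intro!: sum.cong)
  also have "\<dots> = (\<Sum>X\<in>Pow V \<inter> A. weight X)"
    by (rule sum.inter_restrict[symmetric]) (simp add: finite_V)
  finally show ?thesis .
qed

lemma prob_compl: "prob (- A) = 1 - prob A"
proof -
  have "(\<lambda>X. of_bool (X \<in> A) + of_bool (X \<in> - A)) = (\<lambda>_. 1 :: real)"
    by auto
  then have "prob A + prob (- A) = 1"
    unfolding prob_def expectation_add[symmetric] by simp
  then show ?thesis by simp
qed

lemma prob_mono: "(\<And>X. X \<subseteq> V \<Longrightarrow> X \<in> A \<Longrightarrow> X \<in> B) \<Longrightarrow> prob A \<le> prob B"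
  unfolding prob_def by (rule expectation_mono) auto

lemma prob_le_1: "prob A \<le> 1"
  using prob_mono[of A UNIV] by (simp add: prob_def)

lemma prob_union_le: "prob (A \<union> B) \<le> prob A + prob B"
  unfolding prob_def expectation_add[symmetric] by (rule expectation_mono) auto

lemma markov_inequality:
  assumes "\<And>X. X \<subseteq> V \<Longrightarrow> 0 \<le> f X" and "0 < a"
  shows "prob {X. a \<le> f X} \<le> expectation f / a"
proof -
  have "prob {X. a \<le> f X} \<le> expectation (\<lambda>X. 1 / a * f X)"
    unfolding prob_def by (rule expectation_mono) (use assms in auto)
  then show ?thesis using expectation_mult_left[of "1 / a" f] by simp
qed

lemma chebyshev_inequality:
  assumes "0 < a"
  shows "prob {X. a \<le> \<bar>f X - expectation f\<bar>}
    \<le> expectation (\<lambda>X. (f X - expectation f)\<^sup>2) / a\<^sup>2"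
proof -
  have "prob {X. a \<le> \<bar>f X - expectation f\<bar>} \<le> prob {X. a\<^sup>2 \<le> (f X - expectation f)\<^sup>2}"
    by (rule prob_mono) (use assms in \<open>auto simp: abs_le_square_iff[symmetric]\<close>)
  also have "\<dots> \<le> expectation (\<lambda>X. (f X - expectation f)\<^sup>2) / a\<^sup>2"
    by (rule markov_inequality) (use assms in auto)
  finally show ?thesis .
qed

lemma variance_sum:
  "expectation (\<lambda>X. ((\<Sum>i\<in>I. f i X) - (\<Sum>i\<in>I. expectation (f i)))\<^sup>2)
    = (\<Sum>i\<in>I. \<Sum>j\<in>I. expectation (\<lambda>X. f i X * f j X) - expectation (f i) * expectation (f j))"
proof -
  let ?m = "\<lambda>i. expectation (f i)"
  have "((\<Sum>i\<in>I. f i X) - (\<Sum>i\<in>I. ?m i))\<^sup>2 =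
      (\<Sum>i\<in>I. \<Sum>j\<in>I. f i X * f j X - ?m i * f j X - ?m j * f i X + ?m i * ?m j)" for X
    by (simp add: power2_eq_square sum_subtractf[symmetric] sum_product algebra_simps)
  then show ?thesis
    by (simp add: expectation_sum expectation_add expectation_diff expectation_mult_left)
qed

lemma expectation_avoids:
  "expectation (\<lambda>X. of_bool (X \<inter> B = {})) = (\<Prod>e\<in>V \<inter> B. 1 - p e)"
proof -
  have "expectation (\<lambda>X. of_bool (X \<inter> B = {})) =
      expectation (\<lambda>X. \<Prod>e\<in>V. if e \<in> X then of_bool (e \<notin> B) else 1)"
  proof (rule expectation_cong)
    fix X assume "X \<subseteq> V"
    then have "of_bool (X \<inter> B = {}) = (of_bool (\<forall>e\<in>V. e \<in> X \<longrightarrow> e \<notin> B) :: real)"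
      by (intro arg_cong[where f = of_bool]) blast
    also have "\<dots> = (\<Prod>e\<in>V. of_bool (e \<in> X \<longrightarrow> e \<notin> B))"
      by (rule prod_of_bool[OF finite_V, symmetric])
    also have "\<dots> = (\<Prod>e\<in>V. if e \<in> X then of_bool (e \<notin> B) else 1)"
      by (intro prod.cong) auto
    finally show "of_bool (X \<inter> B = {}) = (\<Prod>e\<in>V. if e \<in> X then of_bool (e \<notin> B) else 1 :: real)" .
  qed
  also have "\<dots> = (\<Prod>e\<in>V. if e \<in> B then 1 - p e else 1)"
    unfolding expectation_prod by (intro prod.cong) auto
  also have "\<dots> = (\<Prod>e\<in>V \<inter> B. 1 - p e)"
    by (rule prod.inter_restrict[symmetric, OF finite_V])
  finally show ?thesis .
qed

lemma expectation_contains: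
  assumes "C \<subseteq> V"
  shows "expectation (\<lambda>X. of_bool (C \<subseteq> X)) = prod p C"
proof -
  have "expectation (\<lambda>X. of_bool (C \<subseteq> X)) =
      expectation (\<lambda>X. \<Prod>e\<in>V. if e \<in> X then 1 else of_bool (e \<notin> C))"
  proof (rule expectation_cong)
    fix X
    have "of_bool (C \<subseteq> X) = (of_bool (\<forall>e\<in>V. e \<in> C \<longrightarrow> e \<in> X) :: real)"
      using assms by (intro arg_cong[where f = of_bool]) blast
    also have "\<dots> = (\<Prod>e\<in>V. of_bool (e \<in> C \<longrightarrow> e \<in> X))"
      by (rule prod_of_bool[OF finite_V, symmetric])
    also have "\<dots> = (\<Prod>e\<in>V. if e \<in> X then 1 else of_bool (e \<notin> C))"
      by (intro prod.cong) auto
    finally show "of_bool (C \<subseteq> X) = (\<Prod>e\<in>V. if e \<in> X then 1 else of_bool (e \<notin> C) :: real)" .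
  qed
  also have "\<dots> = (\<Prod>e\<in>V. if e \<in> C then p e else 1)"
    unfolding expectation_prod by (intro prod.cong) auto
  also have "\<dots> = prod p C"
    using prod.inter_restrict[OF finite_V, of p C] assms by (simp add: Int_absorb1)
  finally show ?thesis .
qed

lemma card_eq_sum_indicator: "X \<subseteq> V \<Longrightarrow> real (card X) = (\<Sum>e\<in>V. of_bool (e \<in> X))"
  using finite_V by (simp add: Int_absorb1 Int_commute)

lemma expectation_indicator: "e \<in> V \<Longrightarrow> expectation (\<lambda>X. of_bool (e \<in> X)) = p e"
  using expectation_contains[of "{e}"] by simp

lemma expectation_card: "expectation (\<lambda>X. real (card X)) = (\<Sum>e\<in>V. p e)"
proof -
  have "expectation (\<lambda>X. real (card X)) = (\<Sum>e\<in>V. expectation (\<lambda>X. of_bool (e \<in> X)))"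
    unfolding expectation_sum[symmetric] by (intro expectation_cong card_eq_sum_indicator)
  also have "\<dots> = (\<Sum>e\<in>V. p e)"
    by (intro sum.cong refl expectation_indicator)
  finally show ?thesis .
qed

lemma variance_card_le:
  "expectation (\<lambda>X. (real (card X) - (\<Sum>e\<in>V. p e))\<^sup>2) \<le> (\<Sum>e\<in>V. p e)"
proof -
  let ?f = "\<lambda>e X. of_bool (e \<in> X) :: real"
  have "expectation (\<lambda>X. (real (card X) - (\<Sum>e\<in>V. p e))\<^sup>2)
      = expectation (\<lambda>X. ((\<Sum>e\<in>V. ?f e X) - (\<Sum>e\<in>V. expectation (?f e)))\<^sup>2)"
    using card_eq_sum_indicator expectation_indicator
    by (intro expectation_cong) (simp cong: sum.cong del: sum_of_bool_eq)
  also have "\<dots> = (\<Sum>i\<in>V. \<Sum>j\<in>V. expectation (\<lambda>X. ?f i X * ?f j X) - p i * p j)"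
    unfolding variance_sum by (intro sum.cong refl) (simp add: expectation_indicator)
  also have "\<dots> = (\<Sum>i\<in>V. \<Sum>j\<in>V. if i = j then p i - p i * p i else 0)"
  proof (intro sum.cong refl)
    fix i j assume "i \<in> V" "j \<in> V"
    have "(\<lambda>X. ?f i X * ?f j X) = (\<lambda>X. of_bool ({i, j} \<subseteq> X))"
      by auto
    then have "expectation (\<lambda>X. ?f i X * ?f j X) = prod p {i, j}"
      using expectation_contains[of "{i, j}"] \<open>i \<in> V\<close> \<open>j \<in> V\<close> by simp
    then show "expectation (\<lambda>X. ?f i X * ?f j X) - p i * p j = (if i = j then p i - p i * p i else 0)"
      by simp
  qed
  also have "\<dots> \<le> (\<Sum>e\<in>V. p e)"
    using p_nonneg by (simp add: finite_V) (intro sum_mono, auto)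
  finally show ?thesis .
qed

end

section \<open>The lazy random walk\<close>

lemma cdist_commute: "cdist N x y = cdist N y x"
  unfolding cdist_def by auto

lemma adj_commute: "adj N S x y = adj N S y x"
  unfolding adj_def by (auto simp: cdist_commute min.commute max.commute)

lemma adj_irrefl: "\<not> adj N S x x"
  unfolding adj_def by auto

lemma cdist_succ: "2 \<le> N \<Longrightarrow> x < N \<Longrightarrow> cdist N x ((x + 1) mod N) = 1"
  unfolding cdist_def by (cases "x + 1 < N") (auto simp: mod_if)

lemma cdist_eq_1_cases:
  assumes "x < N" "y < N" "cdist N x y = 1"
  shows "y = x + 1 \<or> x = y + 1 \<or> (x = 0 \<and> y = N - 1) \<or> (x = N - 1 \<and> y = 0)"
  using assms unfolding cdist_def by (auto split: if_splits simp: min_def)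

lemma doeblin_contraction:
  fixes \<eta> :: "nat \<Rightarrow> real" and K :: "nat \<Rightarrow> nat \<Rightarrow> real"
  assumes K_ge: "\<And>z y. z < N \<Longrightarrow> y < N \<Longrightarrow> \<epsilon> \<le> K z y"
    and K_rowsum: "\<And>z. z < N \<Longrightarrow> (\<Sum>y<N. K z y) = 1"
    and \<eta>_sum: "(\<Sum>z<N. \<eta> z) = 0"
  shows "(\<Sum>y<N. \<bar>\<Sum>z<N. \<eta> z * K z y\<bar>) \<le> (1 - real N * \<epsilon>) * (\<Sum>z<N. \<bar>\<eta> z\<bar>)"
proof -
  have "(\<Sum>y<N. \<bar>\<Sum>z<N. \<eta> z * K z y\<bar>) = (\<Sum>y<N. \<bar>\<Sum>z<N. \<eta> z * (K z y - \<epsilon>)\<bar>)"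
    using \<eta>_sum by (simp add: algebra_simps sum_subtractf flip: sum_distrib_left)
  also have "\<dots> \<le> (\<Sum>y<N. \<Sum>z<N. \<bar>\<eta> z\<bar> * (K z y - \<epsilon>))"
    by (intro sum_mono order.trans[OF sum_abs]) (auto simp: abs_mult K_ge)
  also have "\<dots> = (\<Sum>z<N. \<bar>\<eta> z\<bar> * (\<Sum>y<N. K z y - \<epsilon>))"
    by (simp only: sum_distrib_left) (rule sum.swap)
  also have "\<dots> = (1 - real N * \<epsilon>) * (\<Sum>z<N. \<bar>\<eta> z\<bar>)"
    by (simp add: sum_subtractf K_rowsum sum_distrib_left mult.commute)
  finally show ?thesis .
qed

locale lazy_walk =
  fixes N :: nat and S :: "(nat \<times> nat) set"
  assumes two_le_N: "2 \<le> N"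
begin

abbreviation "P \<equiv> lazyP N S"
abbreviation "Pt \<equiv> lazyPt N S"
abbreviation "\<pi> \<equiv> stat N S"
abbreviation "vol \<equiv> (\<Sum>z<N. deg N S z)"

lemma adj_succ: "x < N \<Longrightarrow> adj N S x ((x + 1) mod N)"
  using two_le_N cdist_succ[of N x] unfolding adj_def by (auto simp: mod_if)

lemma deg_pos: "x < N \<Longrightarrow> 0 < deg N S x"
proof -
  assume "x < N"
  then have "(x + 1) mod N \<in> {y. y < N \<and> adj N S x y}"
    using adj_succ two_le_N by simp
  then show ?thesis
    unfolding deg_def by (auto simp: card_gt_0_iff)
qed

lemma deg_le: "deg N S x \<le> N"
  unfolding deg_def by (rule order.trans[OF card_mono[of "{..<N}"]]) auto

lemma N_le_vol: "real N \<le> real vol"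
proof -
  have "N \<le> vol"
    using sum_mono[of "{..<N}" "\<lambda>_. 1" "deg N S"] deg_pos by (simp add: Suc_le_eq)
  then show ?thesis
    by (simp only: of_nat_le_iff)
qed

lemma vol_pos: "0 < real vol"
  using N_le_vol two_le_N by linarith

lemma sum_stat_ge_card:
  assumes "A \<subseteq> {..<N}"
  shows "real (card A) / real vol \<le> (\<Sum>x\<in>A. \<pi> x)"
proof -
  have "1 / real vol \<le> \<pi> x" if "x \<in> A" for x
    unfolding stat_def using deg_pos[of x] vol_pos that assms by (intro divide_right_mono) auto
  then show ?thesis
    using sum_mono[of A "\<lambda>_. 1 / real vol" \<pi>] by simp
qed

lemma deg_le_card_S:
  assumes "S \<subseteq> vpairs N"
  shows "deg N S x \<le> 4 + card {y. (x, y) \<in> S} + card {y. (y, x) \<in> S}"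
proof -
  have finite: "finite {y. (x, y) \<in> S}" "finite {y. (y, x) \<in> S}"
    by (rule finite_subset[of _ "{..<N}"], use assms in \<open>auto simp: vpairs_def\<close>)+
  have "{y. y < N \<and> adj N S x y} \<subseteq> {x + 1, x - 1, 0, N - 1} \<union> {y. (x, y) \<in> S} \<union> {y. (y, x) \<in> S}"
  proof
    fix y assume "y \<in> {y. y < N \<and> adj N S x y}"
    then have "x < N" "y < N" "cdist N x y = 1 \<or> (min x y, max x y) \<in> S"
      unfolding adj_def by auto
    then show "y \<in> {x + 1, x - 1, 0, N - 1} \<union> {y. (x, y) \<in> S} \<union> {y. (y, x) \<in> S}"
      using cdist_eq_1_cases[of x N y] by (cases "x \<le> y") (auto simp: min_def max_def)
  qed
  then have "deg N S x \<le> card ({x + 1, x - 1, 0, N - 1} \<union> {y. (x, y) \<in> S} \<union> {y. (y, x) \<in> S})"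
    unfolding deg_def by (intro card_mono) (use finite in auto)
  also have "\<dots> \<le> card {x + 1, x - 1, 0, N - 1} + card {y. (x, y) \<in> S} + card {y. (y, x) \<in> S}"
    by (rule order.trans[OF card_Un_le add_right_mono[OF card_Un_le]])
  also have "card {x + 1, x - 1, 0, N - 1} \<le> 4"
    using card_length[of "[x + 1, x - 1, 0, N - 1]"] by simp
  finally show ?thesis by simp
qed

lemma vol_le_card_S:
  assumes "S \<subseteq> vpairs N"
  shows "real vol \<le> 4 * real N + 2 * real (card S)"
proof -
  have finite: "finite {y. (x, y) \<in> S}" "finite {y. (y, x) \<in> S}" for x
    by (rule finite_subset[of _ "{..<N}"], use assms in \<open>auto simp: vpairs_def\<close>)+
  have "(SIGMA x:{..<N}. {y. (x, y) \<in> S}) = S"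
    using assms unfolding vpairs_def by auto
  then have out: "(\<Sum>x<N. card {y. (x, y) \<in> S}) = card S"
    using card_SigmaI[of "{..<N}" "\<lambda>x. {y. (x, y) \<in> S}"] finite by simp
  have "(SIGMA x:{..<N}. {y. (y, x) \<in> S}) = prod.swap ` S"
    using assms unfolding vpairs_def by force
  then have into: "(\<Sum>x<N. card {y. (y, x) \<in> S}) = card S"
    using card_SigmaI[of "{..<N}" "\<lambda>x. {y. (y, x) \<in> S}"] finite card_image[OF inj_swap, of S] by simp
  have "vol \<le> (\<Sum>x<N. 4 + card {y. (x, y) \<in> S} + card {y. (y, x) \<in> S})"
    by (intro sum_mono deg_le_card_S[OF assms])
  also have "\<dots> = 4 * N + 2 * card S"
    by (simp add: sum.distrib out into)
  finally show ?thesis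
    by (simp only: of_nat_le_iff[symmetric])
qed

lemma lazyP_nonneg: "0 \<le> P x y"
  unfolding lazyP_def by auto

lemma lazyP_diag: "P x x = 1 / 2"
  unfolding lazyP_def by auto

lemma lazyP_offdiag: "x \<noteq> y \<Longrightarrow> P x y = of_bool (adj N S x y) / (2 * real (deg N S x))"
  unfolding lazyP_def by auto

lemma lazyP_rowsum: "x < N \<Longrightarrow> (\<Sum>y<N. P x y) = 1"
proof -
  assume x: "x < N"
  have "P x y = of_bool (x = y) / 2 + of_bool (adj N S x y) / (2 * real (deg N S x))" for y
    unfolding lazyP_def using adj_irrefl[of N S x] by auto
  then have "(\<Sum>y<N. P x y) =
      (\<Sum>y<N. of_bool (x = y)) / 2 + (\<Sum>y<N. of_bool (adj N S x y)) / (2 * real (deg N S x))"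
    by (simp only: sum.distrib sum_divide_distrib)
  also have "(\<Sum>y<N. of_bool (x = y) :: real) = 1"
    using x by simp
  also have "(\<Sum>y<N. of_bool (adj N S x y) :: real) = real (deg N S x)"
    unfolding deg_def by (simp add: Collect_conj_eq lessThan_def)
  finally show ?thesis
    using deg_pos[OF x] by simp
qed

lemma stat_nonneg: "0 \<le> \<pi> x"
  unfolding stat_def by (intro divide_nonneg_nonneg) (simp_all add: sum_nonneg)

lemma stat_sum: "(\<Sum>x<N. \<pi> x) = 1"
  unfolding stat_def using vol_pos by (simp add: sum_divide_distrib[symmetric])

lemma stat_lazyP_offdiag:
  "x \<noteq> y \<Longrightarrow> x < N \<Longrightarrow> \<pi> x * P x y = of_bool (adj N S x y) / (2 * real vol)"
  using deg_pos[of x] vol_pos by (simp add: lazyP_offdiag stat_def)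

lemma reversible: "x < N \<Longrightarrow> y < N \<Longrightarrow> \<pi> x * P x y = \<pi> y * P y x"
  by (cases "x = y") (simp_all add: stat_lazyP_offdiag adj_commute)

lemma stationary: "y < N \<Longrightarrow> (\<Sum>x<N. \<pi> x * P x y) = \<pi> y"
proof -
  assume y: "y < N"
  have "(\<Sum>x<N. \<pi> x * P x y) = (\<Sum>x<N. \<pi> y * P y x)"
    using y reversible by (intro sum.cong) auto
  also have "\<dots> = \<pi> y"
    using lazyP_rowsum[OF y] by (simp add: sum_distrib_left[symmetric])
  finally show ?thesis .
qed

lemma lazyPt_nonneg: "0 \<le> Pt t x y"
  by (induction t arbitrary: y) (auto intro!: sum_nonneg mult_nonneg_nonneg lazyP_nonneg)

lemma lazyPt_rowsum: "x < N \<Longrightarrow> (\<Sum>y<N. Pt t x y) = 1"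
proof (induction t)
  case (Suc t)
  have "(\<Sum>y<N. Pt (Suc t) x y) = (\<Sum>z<N. Pt t x z * (\<Sum>y<N. P z y))"
    by (simp only: lazyPt.simps sum_distrib_left) (rule sum.swap)
  then show ?case
    using Suc by (simp add: lazyP_rowsum)
qed simp

lemma lazyPt_add: "y < N \<Longrightarrow> Pt (t + n) x y = (\<Sum>z<N. Pt t x z * Pt n z y)"
proof (induction n arbitrary: y)
  case (Suc n)
  have "Pt (t + Suc n) x y = (\<Sum>w<N. (\<Sum>z<N. Pt t x z * Pt n z w) * P w y)"
    using Suc.IH by simp
  also have "\<dots> = (\<Sum>z<N. Pt t x z * (\<Sum>w<N. Pt n z w * P w y))"
    by (simp only: sum_distrib_left sum_distrib_right mult.assoc) (rule sum.swap)
  finally show ?case by simp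
qed (simp add: if_distrib cong: if_cong)

lemma stat_lazyPt: "y < N \<Longrightarrow> (\<Sum>x<N. \<pi> x * Pt t x y) = \<pi> y"
proof (induction t arbitrary: y)
  case (Suc t)
  have "(\<Sum>x<N. \<pi> x * Pt (Suc t) x y) = (\<Sum>z<N. (\<Sum>x<N. \<pi> x * Pt t x z) * P z y)"
    by (simp only: lazyPt.simps sum_distrib_left sum_distrib_right mult.assoc) (rule sum.swap)
  then show ?case
    using Suc by (simp add: stationary)
qed (simp add: if_distrib cong: if_cong)

lemma var_dist_contraction:
  assumes x: "x < N" and Pt_ge: "\<And>z y. z < N \<Longrightarrow> y < N \<Longrightarrow> \<epsilon> \<le> Pt n z y"
  shows "var_dist N S x (t + n) \<le> (1 - real N * \<epsilon>) * var_dist N S x t"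
proof -
  have "Pt (t + n) x y - \<pi> y = (\<Sum>z<N. (Pt t x z - \<pi> z) * Pt n z y)" if "y < N" for y
    using that by (simp add: lazyPt_add left_diff_distrib sum_subtractf stat_lazyPt)
  then have "(\<Sum>y<N. \<bar>Pt (t + n) x y - \<pi> y\<bar>) = (\<Sum>y<N. \<bar>\<Sum>z<N. (Pt t x z - \<pi> z) * Pt n z y\<bar>)"
    by simp
  also have "\<dots> \<le> (1 - real N * \<epsilon>) * (\<Sum>z<N. \<bar>Pt t x z - \<pi> z\<bar>)"
    by (rule doeblin_contraction)
      (use Pt_ge lazyPt_rowsum x stat_sum in \<open>auto simp: sum_subtractf\<close>)
  finally show ?thesis
    unfolding var_dist_def by simp
qed

lemma var_dist_antimono:
  assumes "x < N" and "t \<le> t'"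
  shows "var_dist N S x t' \<le> var_dist N S x t"
  using \<open>t \<le> t'\<close>
proof (induction t' rule: dec_induct)
  case (step m)
  then show ?case
    using var_dist_contraction[OF \<open>x < N\<close> lazyPt_nonneg, of m 1] by simp
qed simp

lemma var_dist_le_1: "x < N \<Longrightarrow> var_dist N S x t \<le> 1"
proof -
  assume x: "x < N"
  have "(\<Sum>y<N. \<bar>Pt t x y - \<pi> y\<bar>) \<le> (\<Sum>y<N. Pt t x y + \<pi> y)"
    by (intro sum_mono) (use lazyPt_nonneg stat_nonneg in \<open>auto simp: abs_le_iff\<close>)
  then show ?thesis
    unfolding var_dist_def by (simp add: sum.distrib lazyPt_rowsum x stat_sum)
qed

text \<open>The walk reaches \<open>x + j\<close> at time \<open>n\<close> by stepping to the successor \<open>j\<close> times and staying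
  put otherwise; each such step has probability at least \<open>1 / (2 N)\<close>.\<close>

lemma lazyPt_ge:
  assumes x: "x < N" and "j \<le> n"
  shows "(1 / (2 * real N)) ^ n \<le> Pt n x ((x + j) mod N)"
  using \<open>j \<le> n\<close>
proof (induction n arbitrary: j)
  case (Suc n)
  obtain i z where z: "z = (x + i) mod N" and i: "i \<le> n"
    and step: "1 / (2 * real N) \<le> P z ((x + j) mod N)"
  proof (cases "j \<le> n")
    case True
    then show ?thesis
      using that[of _ j] two_le_N by (simp add: lazyP_diag field_simps)
  next
    case False
    let ?z = "(x + n) mod N"
    have "?z < N" using two_le_N by simp
    have "j = Suc n"
      using False Suc.prems by simp
    then have "(?z + 1) mod N = (x + j) mod N"
      by (simp add: mod_Suc_eq)
    with \<open>?z < N\<close> have "P ?z ((x + j) mod N) = 1 / (2 * real (deg N S ?z))"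
      using adj_succ[of ?z] adj_irrefl[of N S ?z] by (metis lazyP_offdiag of_bool_eq(2))
    moreover have "1 \<le> real (deg N S ?z)" "real (deg N S ?z) \<le> real N"
      using deg_pos[OF \<open>?z < N\<close>] deg_le by auto
    ultimately show ?thesis
      using that[of _ n] by (simp add: frac_le)
  qed
  have "Pt n x z * P z ((x + j) mod N) \<le> Pt (Suc n) x ((x + j) mod N)"
    unfolding lazyPt.simps using z two_le_N
    by (intro member_le_sum) (auto intro: mult_nonneg_nonneg lazyPt_nonneg lazyP_nonneg)
  moreover have "(1 / (2 * real N)) ^ n * (1 / (2 * real N)) \<le> Pt n x z * P z ((x + j) mod N)"
    using Suc.IH[OF i] z step by (intro mult_mono) (auto simp: lazyPt_nonneg)
  ultimately show ?case by simp
qed (use x in simp)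

lemma lazyPt_ge_all:
  assumes "x < N" and "y < N"
  shows "(1 / (2 * real N)) ^ (N - 1) \<le> Pt (N - 1) x y"
proof -
  have "(y + N - x) mod N \<le> N - 1"
    using two_le_N by (simp add: less_Suc_eq_le[symmetric])
  moreover have "(x + (y + N - x) mod N) mod N = y"
    using assms by (simp add: mod_add_right_eq)
  ultimately show ?thesis
    using lazyPt_ge[OF \<open>x < N\<close>] by metis
qed

lemma eventually_var_dist_le: "x < N \<Longrightarrow> \<exists>t. \<forall>t'\<ge>t. var_dist N S x t' \<le> 1 / 4"
proof -
  assume x: "x < N"
  define r where "r = 1 - real N * (1 / (2 * real N)) ^ (N - 1)"
  have "r < 1"
    unfolding r_def using two_le_N by simp
  have "0 \<le> r"
    using sum_mono[of "{..<N}" "\<lambda>_. (1 / (2 * real N)) ^ (N - 1)" "Pt (N - 1) x"]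
      lazyPt_ge_all[OF x] lazyPt_rowsum[OF x] unfolding r_def by simp
  have var_dist_le: "var_dist N S x (m * (N - 1)) \<le> r ^ m" for m
  proof (induction m)
    case (Suc m)
    have "var_dist N S x (m * (N - 1) + (N - 1)) \<le> r * var_dist N S x (m * (N - 1))"
      unfolding r_def by (rule var_dist_contraction[OF x lazyPt_ge_all])
    also have "\<dots> \<le> r * r ^ m"
      using Suc \<open>0 \<le> r\<close> by (intro mult_left_mono) auto
    finally show ?case
      by (simp add: add.commute)
  qed (use var_dist_le_1[OF x] in simp)
  obtain m where "r ^ m < 1 / 4"
    using real_arch_pow_inv[of "1 / 4" r] \<open>0 \<le> r\<close> \<open>r < 1\<close> by auto
  then show ?thesis
    using var_dist_le[of m] var_dist_antimono[OF x] by (meson less_eq_real_def order.trans)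
qed

lemma var_dist_mixing_time: "x < N \<Longrightarrow> var_dist N S x (mixing_time N S) \<le> 1 / 4"
proof -
  assume x: "x < N"
  have "tau_x N S x (1 / 4) \<le> mixing_time N S"
    unfolding mixing_time_def by (rule Max_ge) (use x in auto)
  moreover obtain t0 where "\<forall>t'\<ge>t0. var_dist N S x t' \<le> 1 / 4"
    using eventually_var_dist_le[OF x] by blast
  then have "\<forall>t'\<ge>tau_x N S x (1 / 4). var_dist N S x t' \<le> 1 / 4"
    unfolding tau_x_def by (rule LeastI)
  ultimately show ?thesis by blast
qed

definition markov_op :: "(nat \<Rightarrow> real) \<Rightarrow> nat \<Rightarrow> real" where
  "markov_op f x = (\<Sum>y<N. P x y * f y)"

definition stat_mean :: "(nat \<Rightarrow> real) \<Rightarrow> real" where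
  "stat_mean f = (\<Sum>y<N. \<pi> y * f y)"

definition stat_inner :: "(nat \<Rightarrow> real) \<Rightarrow> (nat \<Rightarrow> real) \<Rightarrow> real" where
  "stat_inner u v = (\<Sum>x<N. \<pi> x * u x * v x)"

definition stat_variance :: "(nat \<Rightarrow> real) \<Rightarrow> real" where
  "stat_variance f = stat_inner (\<lambda>x. f x - stat_mean f) (\<lambda>x. f x - stat_mean f)"

definition dirichlet_energy :: "(nat \<Rightarrow> real) \<Rightarrow> real" where
  "dirichlet_energy f = (\<Sum>x<N. \<Sum>y<N. \<pi> x * P x y * (f x - f y)\<^sup>2) / 2"

lemma lazyPt_sum_eq_markov_op_power:
  "x < N \<Longrightarrow> (\<Sum>y<N. Pt t x y * f y) = (markov_op ^^ t) f x"
proof (induction t arbitrary: f)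
  case 0
  have "(\<Sum>y<N. Pt 0 x y * f y) = (\<Sum>y<N. if x = y then f y else 0)"
    by (intro sum.cong) auto
  then show ?case
    using 0 by simp
next
  case (Suc t)
  have "(\<Sum>y<N. Pt (Suc t) x y * f y) = (\<Sum>z<N. \<Sum>y<N. Pt t x z * (P z y * f y))"
    by (simp add: sum_distrib_right mult.assoc) (rule sum.swap)
  also have "\<dots> = (\<Sum>z<N. Pt t x z * markov_op f z)"
    unfolding markov_op_def by (simp add: sum_distrib_left)
  also have "\<dots> = (markov_op ^^ Suc t) f x"
    using Suc by (simp only: funpow_Suc_right comp_def)
  finally show ?case .
qed

lemma stat_mean_markov_op: "stat_mean (markov_op f) = stat_mean f"
proof -
  have "stat_mean (markov_op f) = (\<Sum>y<N. \<Sum>x<N. \<pi> x * P x y * f y)"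
    unfolding stat_mean_def markov_op_def
    by (simp add: sum_distrib_left mult.assoc) (rule sum.swap)
  also have "\<dots> = stat_mean f"
    unfolding stat_mean_def by (simp add: stationary flip: sum_distrib_right)
  finally show ?thesis .
qed

lemma stat_mean_markov_op_power: "stat_mean ((markov_op ^^ n) f) = stat_mean f"
  by (induction n) (simp_all add: stat_mean_markov_op)

lemma stat_mean_bounds:
  assumes "\<And>y. y < N \<Longrightarrow> lo \<le> f y \<and> f y \<le> hi"
  shows "lo \<le> stat_mean f \<and> stat_mean f \<le> hi"
proof -
  have "(\<Sum>y<N. \<pi> y * lo) \<le> stat_mean f" "stat_mean f \<le> (\<Sum>y<N. \<pi> y * hi)"
    unfolding stat_mean_def using assms stat_nonneg by (auto intro!: sum_mono mult_left_mono)
  then show ?thesis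
    by (simp add: stat_sum flip: sum_distrib_right)
qed

lemma markov_op_power_dist_mean:
  assumes x: "x < N" and f: "\<And>y. y < N \<Longrightarrow> lo \<le> f y \<and> f y \<le> hi"
  shows "\<bar>(markov_op ^^ t) f x - stat_mean f\<bar> \<le> var_dist N S x t * (hi - lo)"
proof -
  let ?c = "(lo + hi) / 2"
  have "(markov_op ^^ t) f x - stat_mean f = (\<Sum>y<N. (Pt t x y - \<pi> y) * f y)"
    unfolding lazyPt_sum_eq_markov_op_power[OF x, symmetric] stat_mean_def
    by (simp add: left_diff_distrib sum_subtractf)
  also have "\<dots> = (\<Sum>y<N. (Pt t x y - \<pi> y) * f y) - ?c * (\<Sum>y<N. Pt t x y - \<pi> y)"
    by (simp add: sum_subtractf lazyPt_rowsum x stat_sum)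
  also have "\<dots> = (\<Sum>y<N. (Pt t x y - \<pi> y) * f y) - (\<Sum>y<N. ?c * (Pt t x y - \<pi> y))"
    by (simp only: sum_distrib_left)
  also have "\<dots> = (\<Sum>y<N. (Pt t x y - \<pi> y) * f y - ?c * (Pt t x y - \<pi> y))"
    by (simp only: sum_subtractf)
  also have "\<dots> = (\<Sum>y<N. (Pt t x y - \<pi> y) * (f y - ?c))"
    by (intro sum.cong refl) (simp add: algebra_simps)
  finally have "\<bar>(markov_op ^^ t) f x - stat_mean f\<bar> = \<bar>\<Sum>y<N. (Pt t x y - \<pi> y) * (f y - ?c)\<bar>"
    by simp
  also have "\<dots> \<le> (\<Sum>y<N. \<bar>Pt t x y - \<pi> y\<bar> * ((hi - lo) / 2))"
  proof (rule order.trans[OF sum_abs], rule sum_mono)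
    fix y assume "y \<in> {..<N}"
    then have "lo \<le> f y" "f y \<le> hi"
      using f[of y] by auto
    then have "\<bar>f y - ?c\<bar> \<le> (hi - lo) / 2"
      by (simp add: abs_le_iff field_simps)
    then show "\<bar>(Pt t x y - \<pi> y) * (f y - ?c)\<bar> \<le> \<bar>Pt t x y - \<pi> y\<bar> * ((hi - lo) / 2)"
      unfolding abs_mult by (intro mult_left_mono) auto
  qed
  also have "\<dots> = var_dist N S x t * (hi - lo)"
    unfolding var_dist_def sum_distrib_right[symmetric] by simp
  finally show ?thesis .
qed

text \<open>At the mixing time the variation distance is at most \<open>1/4\<close>, which turns a deviation of at
  most \<open>w\<close> from the mean into one of at most \<open>w/2\<close>.\<close>

lemma markov_op_power_mixing_time:
  assumes h: "\<And>y. y < N \<Longrightarrow> \<bar>h y - stat_mean h\<bar> \<le> w" and "y < N"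
  shows "\<bar>(markov_op ^^ (j * mixing_time N S)) h y - stat_mean h\<bar> \<le> w / 2 ^ j"
  using \<open>y < N\<close>
proof (induction j arbitrary: y)
  case (Suc j)
  define f where "f = (markov_op ^^ (j * mixing_time N S)) h"
  have "(markov_op ^^ (Suc j * mixing_time N S)) h = (markov_op ^^ mixing_time N S) f"
    unfolding f_def by (simp add: funpow_add)
  moreover have "stat_mean f = stat_mean h"
    unfolding f_def by (rule stat_mean_markov_op_power)
  moreover have "\<bar>(markov_op ^^ mixing_time N S) f y - stat_mean f\<bar>
      \<le> var_dist N S y (mixing_time N S) * ((stat_mean h + w / 2 ^ j) - (stat_mean h - w / 2 ^ j))"
  proof (rule markov_op_power_dist_mean[OF Suc.prems])
    fix z assume "z < N"
    then show "stat_mean h - w / 2 ^ j \<le> f z \<and> f z \<le> stat_mean h + w / 2 ^ j"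
      using Suc.IH[of z] unfolding f_def by (simp add: abs_le_iff)
  qed
  moreover have "var_dist N S y (mixing_time N S) * (2 * (w / 2 ^ j)) \<le> 1 / 4 * (2 * (w / 2 ^ j))"
    using var_dist_mixing_time[OF Suc.prems] Suc.IH[OF Suc.prems]
    by (intro mult_right_mono) auto
  ultimately show ?case
    by simp
qed (use h in simp)

lemma stat_inner_commute: "stat_inner u v = stat_inner v u"
  unfolding stat_inner_def by (simp add: mult_ac)

lemma stat_inner_self_nonneg: "0 \<le> stat_inner u u"
  unfolding stat_inner_def by (intro sum_nonneg) (simp add: stat_nonneg mult.assoc)

lemma stat_inner_diff_left: "stat_inner (\<lambda>x. u x - v x) w = stat_inner u w - stat_inner v w"
  unfolding stat_inner_def by (simp add: algebra_simps sum_subtractf)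

lemma stat_inner_diff_right: "stat_inner w (\<lambda>x. u x - v x) = stat_inner w u - stat_inner w v"
  unfolding stat_inner_def by (simp add: algebra_simps sum_subtractf)

lemma markov_op_diff: "markov_op (\<lambda>y. u y - v y) = (\<lambda>x. markov_op u x - markov_op v x)"
  unfolding markov_op_def by (simp add: right_diff_distrib sum_subtractf)

lemma markov_op_self_adjoint: "stat_inner (markov_op u) v = stat_inner u (markov_op v)"
proof -
  have "stat_inner (markov_op u) v = (\<Sum>x<N. \<Sum>y<N. (\<pi> x * P x y) * u y * v x)"
    unfolding stat_inner_def markov_op_def by (simp add: sum_distrib_left sum_distrib_right mult_ac)
  also have "\<dots> = (\<Sum>x<N. \<Sum>y<N. (\<pi> y * P y x) * u y * v x)"
    by (intro sum.cong refl) (simp add: reversible)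
  also have "\<dots> = stat_inner u (markov_op v)"
    unfolding stat_inner_def markov_op_def
    by (simp add: sum_distrib_left sum_distrib_right mult_ac) (rule sum.swap)
  finally show ?thesis .
qed

lemma sum_stat_lazyP_square:
  "(\<Sum>x<N. \<Sum>y<N. \<pi> x * P x y * (w x + c * w y)\<^sup>2)
    = (1 + c\<^sup>2) * stat_inner w w + 2 * c * stat_inner (markov_op w) w"
proof -
  have rows: "(\<Sum>x<N. \<Sum>y<N. \<pi> x * P x y * (w x * w x)) = stat_inner w w"
    unfolding stat_inner_def
    by (intro sum.cong refl) (simp add: lazyP_rowsum mult_ac flip: sum_distrib_left)
  have "(\<Sum>x<N. \<Sum>y<N. \<pi> x * P x y * (w y * w y)) = (\<Sum>y<N. (\<Sum>x<N. \<pi> x * P x y) * (w y * w y))"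
    by (subst sum.swap) (simp add: sum_distrib_right)
  also have "\<dots> = stat_inner w w"
    unfolding stat_inner_def by (intro sum.cong) (simp_all add: stationary mult.assoc)
  finally have cols: "(\<Sum>x<N. \<Sum>y<N. \<pi> x * P x y * (w y * w y)) = stat_inner w w" .
  have mixed: "(\<Sum>x<N. \<Sum>y<N. \<pi> x * P x y * (w x * w y)) = stat_inner (markov_op w) w"
    unfolding stat_inner_def markov_op_def
    by (intro sum.cong refl) (simp add: sum_distrib_left sum_distrib_right mult_ac)
  have "\<pi> x * P x y * (w x + c * w y)\<^sup>2 = \<pi> x * P x y * (w x * w x)
      + c\<^sup>2 * (\<pi> x * P x y * (w y * w y)) + 2 * c * (\<pi> x * P x y * (w x * w y))" for x y
    by (simp add: power2_eq_square algebra_simps)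
  then show ?thesis
    by (simp add: sum.distrib rows cols mixed distrib_right flip: sum_distrib_left)
qed

text \<open>Laziness makes the walk operator positive semidefinite.\<close>

lemma stat_inner_markov_op_nonneg: "0 \<le> stat_inner (markov_op w) w"
proof -
  have "(\<Sum>x<N. \<pi> x * P x x * (w x + w x)\<^sup>2) \<le> (\<Sum>x<N. \<Sum>y<N. \<pi> x * P x y * (w x + w y)\<^sup>2)"
    by (intro sum_mono member_le_sum) (auto intro!: mult_nonneg_nonneg stat_nonneg lazyP_nonneg)
  moreover have "(\<Sum>x<N. \<pi> x * P x x * (w x + w x)\<^sup>2) = 2 * stat_inner w w"
    unfolding stat_inner_def
    by (simp add: lazyP_diag power2_eq_square algebra_simps sum_distrib_left)
  ultimately show ?thesis
    using sum_stat_lazyP_square[of w 1] by simp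
qed

lemma dirichlet_energy_eq: "dirichlet_energy f = stat_inner f f - stat_inner (markov_op f) f"
  using sum_stat_lazyP_square[of f "-1"] unfolding dirichlet_energy_def by simp

text \<open>\<open>autocorr h n\<close> is \<open>\<langle>P\<^sup>n h, h\<rangle>\<^sub>\<pi>\<close>, split symmetrically so that its even terms are squared norms.\<close>

definition autocorr :: "(nat \<Rightarrow> real) \<Rightarrow> nat \<Rightarrow> real" where
  "autocorr h n = stat_inner ((markov_op ^^ (n - n div 2)) h) ((markov_op ^^ (n div 2)) h)"

lemma autocorr_even: "autocorr h (2 * i) = stat_inner ((markov_op ^^ i) h) ((markov_op ^^ i) h)"
  unfolding autocorr_def by simp

lemma autocorr_odd: "autocorr h (2 * i + 1) = stat_inner (markov_op ((markov_op ^^ i) h)) ((markov_op ^^ i) h)"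
  unfolding autocorr_def by simp

text \<open>The second differences of \<^const>\<open>autocorr\<close> are squared norms or quadratic forms of the
  positive semidefinite operator \<open>P\<close>.\<close>

lemma autocorr_increment_antimono:
  "autocorr h (Suc n) - autocorr h (Suc (Suc n)) \<le> autocorr h n - autocorr h (Suc n)"
proof (cases "even n")
  case True
  then obtain i where n: "n = 2 * i" by blast
  define u where "u = (markov_op ^^ i) h"
  have "0 \<le> stat_inner (\<lambda>x. u x - markov_op u x) (\<lambda>x. u x - markov_op u x)"
    by (rule stat_inner_self_nonneg)
  also have "\<dots> = stat_inner u u - 2 * stat_inner (markov_op u) u + stat_inner (markov_op u) (markov_op u)"
    unfolding stat_inner_diff_left stat_inner_diff_right stat_inner_commute[of u "markov_op u"] by simp
  finally show ?thesis
    using autocorr_even[of h i] autocorr_odd[of h i] autocorr_even[of h "Suc i"]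
    unfolding n u_def by (simp add: numeral_2_eq_2)
next
  case False
  then obtain i where n: "n = 2 * i + 1" by (metis oddE)
  define u where "u = (markov_op ^^ i) h"
  have "0 \<le> stat_inner (markov_op (\<lambda>x. u x - markov_op u x)) (\<lambda>x. u x - markov_op u x)"
    by (rule stat_inner_markov_op_nonneg)
  also have "\<dots> = stat_inner (markov_op u) u - 2 * stat_inner (markov_op u) (markov_op u)
      + stat_inner (markov_op (markov_op u)) (markov_op u)"
    unfolding markov_op_diff stat_inner_diff_left stat_inner_diff_right
      markov_op_self_adjoint[of "markov_op u" u] by simp
  finally show ?thesis
    using autocorr_odd[of h i] autocorr_even[of h "Suc i"] autocorr_odd[of h "Suc i"]
    unfolding n u_def by (simp add: numeral_2_eq_2)
qed

lemma autocorr_ge: "autocorr h 0 - real n * (autocorr h 0 - autocorr h 1) \<le> autocorr h n"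
proof -
  have increment: "autocorr h m - autocorr h (Suc m) \<le> autocorr h 0 - autocorr h 1" for m
  proof (induction m)
    case (Suc m)
    then show ?case
      using autocorr_increment_antimono[of h m] by linarith
  qed simp
  show ?thesis
  proof (induction n)
    case (Suc n)
    then show ?case
      using increment[of n] by (simp add: algebra_simps)
  qed simp
qed

text \<open>Concavity of \<^const>\<open>autocorr\<close> bounds its drop over \<open>2kT\<close> steps by \<open>2kT E(g)\<close>, while
  mixing forces its value at \<open>2kT\<close> below \<open>4 / 4\<^sup>k\<close>.\<close>

theorem stat_variance_le_mixing_time_energy:
  assumes g: "\<And>y. y < N \<Longrightarrow> \<bar>g y\<bar> \<le> 1"
  shows "stat_variance g \<le> 2 * real k * real (mixing_time N S) * dirichlet_energy g + 4 / 4 ^ k"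
proof -
  define T where "T = mixing_time N S"
  define h where "h = (\<lambda>y. g y - stat_mean g)"
  define u where "u = (markov_op ^^ (k * T)) h"
  have "\<bar>stat_mean g\<bar> \<le> 1"
    using stat_mean_bounds[of "-1" g 1] g by (auto simp: abs_le_iff)
  then have h_bound: "\<bar>h y\<bar> \<le> 2" if "y < N" for y
    using g[OF that] unfolding h_def by linarith
  have "stat_mean h = stat_mean g - stat_mean g * (\<Sum>y<N. \<pi> y)"
    unfolding h_def stat_mean_def by (simp add: right_diff_distrib sum_subtractf sum_distrib_right mult.commute)
  then have "stat_mean h = 0"
    by (simp add: stat_sum)
  then have u_bound: "\<bar>u y\<bar> \<le> 2 / 2 ^ k" if "y < N" for y
    using markov_op_power_mixing_time[of h 2 y k] h_bound that unfolding u_def T_def by simp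
  have "dirichlet_energy h = dirichlet_energy g"
    unfolding dirichlet_energy_def h_def by simp
  then have energy: "autocorr h 0 - autocorr h 1 = dirichlet_energy g"
    using dirichlet_energy_eq[of h] unfolding autocorr_def by simp
  have variance: "autocorr h 0 = stat_variance g"
    unfolding autocorr_def stat_variance_def h_def by simp
  have "autocorr h (2 * (k * T)) = stat_inner u u"
    unfolding u_def by (rule autocorr_even)
  also have "\<dots> \<le> (\<Sum>x<N. \<pi> x * (2 / 2 ^ k)\<^sup>2)"
    unfolding stat_inner_def mult.assoc
    using u_bound abs_le_square_iff[of "u _" "2 / 2 ^ k"]
    by (intro sum_mono mult_left_mono) (auto simp: stat_nonneg power2_eq_square)
  also have "\<dots> = (2 / 2 ^ k)\<^sup>2"
    unfolding sum_distrib_right[symmetric] stat_sum by simp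
  also have "\<dots> = 4 / 4 ^ k"
    by (simp add: power2_eq_square flip: power_mult_distrib)
  finally show ?thesis
    using autocorr_ge[of h "2 * (k * T)"] energy variance unfolding T_def by (simp add: algebra_simps)
qed

end

section \<open>A test function with small energy and large variance\<close>

definition block_len :: "nat \<Rightarrow> nat" where
  "block_len N = N div 8"

text \<open>A long-range edge across a good cut joins
  \<open>[0, L)\<close> to \<open>[6L, N)\<close>, where the test function below equals \<open>-1\<close>.\<close>

definition good_cut :: "nat \<Rightarrow> (nat \<times> nat) set \<Rightarrow> nat \<Rightarrow> bool" where
  "good_cut N S k \<longleftrightarrow> (\<forall>x y. (x, y) \<in> S \<longrightarrow> cdist N x y \<noteq> 1 \<longrightarrow> x \<le> k \<longrightarrow> k < y \<longrightarrow>
      x < block_len N \<and> 6 * block_len N \<le> y)"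

definition left_cuts :: "nat \<Rightarrow> (nat \<times> nat) set \<Rightarrow> nat set" where
  "left_cuts N S = {k \<in> {block_len N..<2 * block_len N}. good_cut N S k}"

definition right_cuts :: "nat \<Rightarrow> (nat \<times> nat) set \<Rightarrow> nat set" where
  "right_cuts N S = {k \<in> {5 * block_len N..<6 * block_len N}. good_cut N S k}"

definition count_below :: "nat set \<Rightarrow> nat \<Rightarrow> real" where
  "count_below G x = real (card {k \<in> G. k < x})"

text \<open>The test function climbs from \<open>-1\<close> to \<open>1\<close> in equal steps across the good left cuts and
  descends back across the good right cuts, so it is constant along every long-range edge.\<close>

definition test_fun :: "nat \<Rightarrow> (nat \<times> nat) set \<Rightarrow> nat \<Rightarrow> real" where
  "test_fun N S x = -1 + 2 * count_below (left_cuts N S) x / real (card (left_cuts N S))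
                    - 2 * count_below (right_cuts N S) x / real (card (right_cuts N S))"

lemma finite_left_cuts [simp]: "finite (left_cuts N S)"
  unfolding left_cuts_def by auto

lemma finite_right_cuts [simp]: "finite (right_cuts N S)"
  unfolding right_cuts_def by auto

lemma count_below_add:
  assumes "finite G" "a \<le> b"
  shows "count_below G b = count_below G a + real (card {k \<in> G. a \<le> k \<and> k < b})"
proof -
  have "{k \<in> G. k < b} = {k \<in> G. k < a} \<union> {k \<in> G. a \<le> k \<and> k < b}"
    using assms by auto
  moreover have "card ({k \<in> G. k < a} \<union> {k \<in> G. a \<le> k \<and> k < b}) =
      card {k \<in> G. k < a} + card {k \<in> G. a \<le> k \<and> k < b}"
    by (rule card_Un_disjoint) (use assms in auto)
  ultimately show ?thesis
    unfolding count_below_def by simp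
qed

lemma count_below_Suc: "finite G \<Longrightarrow> count_below G (Suc x) = count_below G x + of_bool (x \<in> G)"
proof -
  assume "finite G"
  moreover have "{k \<in> G. x \<le> k \<and> k < Suc x} = (if x \<in> G then {x} else {})"
    by (auto simp: less_Suc_eq_le)
  ultimately show ?thesis
    using count_below_add[of G x "Suc x"] by simp
qed

lemma count_below_le_card: "finite G \<Longrightarrow> count_below G x \<le> real (card G)"
  unfolding count_below_def by (auto intro: card_mono)

lemma count_below_eq_0: "(\<And>k. k \<in> G \<Longrightarrow> x \<le> k) \<Longrightarrow> count_below G x = 0"
  unfolding count_below_def by (subgoal_tac "{k \<in> G. k < x} = {}") (auto simp: not_less[symmetric])

lemma count_below_eq_card: "(\<And>k. k \<in> G \<Longrightarrow> k < x) \<Longrightarrow> count_below G x = real (card G)"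
  unfolding count_below_def by (subgoal_tac "{k \<in> G. k < x} = G") auto

locale test_fun_setup =
  fixes N :: nat and S :: "(nat \<times> nat) set"
  assumes sixteen_le_N: "16 \<le> N" and S_subset: "S \<subseteq> vpairs N"
    and left_cuts_nonempty: "left_cuts N S \<noteq> {}" and right_cuts_nonempty: "right_cuts N S \<noteq> {}"
begin

sublocale lazy_walk N S
  using sixteen_le_N by unfold_locales simp

abbreviation "L \<equiv> block_len N"
abbreviation "k\<^sub>1 \<equiv> real (card (left_cuts N S))"
abbreviation "k\<^sub>2 \<equiv> real (card (right_cuts N S))"
abbreviation "g \<equiv> test_fun N S"

lemma k1_pos: "0 < k\<^sub>1"
  using left_cuts_nonempty by (simp add: card_gt_0_iff)

lemma k2_pos: "0 < k\<^sub>2"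
  using right_cuts_nonempty by (simp add: card_gt_0_iff)

lemma two_le_L: "2 \<le> L"
  unfolding block_len_def using sixteen_le_N by simp

lemma six_L_less_N: "6 * L < N"
  unfolding block_len_def using sixteen_le_N by simp

lemma left_cuts_range: "k \<in> left_cuts N S \<Longrightarrow> L \<le> k \<and> k < 2 * L"
  unfolding left_cuts_def by auto

lemma right_cuts_range: "k \<in> right_cuts N S \<Longrightarrow> 5 * L \<le> k \<and> k < 6 * L"
  unfolding right_cuts_def by auto

lemma test_fun_low: "x \<le> L \<Longrightarrow> g x = -1"
  unfolding test_fun_def using left_cuts_range right_cuts_range
  by (subst count_below_eq_0, force)+ simp

lemma test_fun_mid: "2 * L \<le> x \<Longrightarrow> x \<le> 5 * L \<Longrightarrow> g x = 1"
  unfolding test_fun_def using left_cuts_range right_cuts_range left_cuts_nonempty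
  by (subst count_below_eq_card, force, subst count_below_eq_0, force) simp

lemma test_fun_high: "6 * L \<le> x \<Longrightarrow> g x = -1"
  unfolding test_fun_def using left_cuts_range right_cuts_range left_cuts_nonempty right_cuts_nonempty
  by (subst count_below_eq_card, force)+ simp

lemma abs_test_fun_le: "\<bar>g x\<bar> \<le> 1"
proof (cases "x \<le> 5 * L")
  case True
  then have "count_below (right_cuts N S) x = 0"
    using right_cuts_range by (intro count_below_eq_0) force
  moreover have "0 \<le> count_below (left_cuts N S) x" "count_below (left_cuts N S) x \<le> k\<^sub>1"
    using count_below_le_card[of "left_cuts N S" x] by (simp_all add: count_below_def)
  ultimately show ?thesis
    unfolding test_fun_def using k1_pos by (auto simp: abs_le_iff field_simps)
next
  case False
  then have "count_below (left_cuts N S) x = k\<^sub>1"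
    using left_cuts_range by (intro count_below_eq_card) force
  moreover have "0 \<le> count_below (right_cuts N S) x" "count_below (right_cuts N S) x \<le> k\<^sub>2"
    using count_below_le_card[of "right_cuts N S" x] by (simp_all add: count_below_def)
  ultimately show ?thesis
    unfolding test_fun_def using k1_pos k2_pos by (auto simp: abs_le_iff field_simps)
qed

lemma test_fun_long_edge:
  assumes ab: "(a, b) \<in> S" and long: "cdist N a b \<noteq> 1"
  shows "g a = g b"
proof (cases "\<exists>k \<in> left_cuts N S \<union> right_cuts N S. a \<le> k \<and> k < b")
  case True
  then obtain k where "good_cut N S k" "a \<le> k" "k < b"
    unfolding left_cuts_def right_cuts_def by auto
  then have "a < L" "6 * L \<le> b"
    using ab long unfolding good_cut_def by auto
  then show ?thesis
    using test_fun_low[of a] test_fun_high[of b] by simp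
next
  case False
  have "a \<le> b"
    using ab S_subset unfolding vpairs_def by auto
  moreover have "{k \<in> left_cuts N S. a \<le> k \<and> k < b} = {}" "{k \<in> right_cuts N S. a \<le> k \<and> k < b} = {}"
    using False by auto
  ultimately have "count_below (left_cuts N S) b = count_below (left_cuts N S) a"
    "count_below (right_cuts N S) b = count_below (right_cuts N S) a"
    using count_below_add[of _ a b] by simp_all
  then show ?thesis
    unfolding test_fun_def by simp
qed

definition jump_sq :: "nat \<Rightarrow> real" where
  "jump_sq k = 4 * of_bool (k \<in> left_cuts N S) / k\<^sub>1\<^sup>2 + 4 * of_bool (k \<in> right_cuts N S) / k\<^sub>2\<^sup>2"

lemma jump_sq_nonneg: "0 \<le> jump_sq k"
  unfolding jump_sq_def by simp

lemma test_fun_Suc: "(g (Suc x) - g x)\<^sup>2 = jump_sq x"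
proof -
  have "g (Suc x) - g x = 2 * of_bool (x \<in> left_cuts N S) / k\<^sub>1 - 2 * of_bool (x \<in> right_cuts N S) / k\<^sub>2"
    unfolding test_fun_def count_below_Suc[OF finite_left_cuts] count_below_Suc[OF finite_right_cuts]
    using k1_pos k2_pos by (simp add: add_divide_distrib)
  moreover have "\<not> (x \<in> left_cuts N S \<and> x \<in> right_cuts N S)"
    using left_cuts_range right_cuts_range by force
  ultimately show ?thesis
    unfolding jump_sq_def by (auto simp: power_divide)
qed

lemma test_fun_adj_sq_le:
  assumes "adj N S x y"
  shows "(g x - g y)\<^sup>2 \<le> of_bool (y = Suc x) * jump_sq x + of_bool (x = Suc y) * jump_sq y"
proof -
  have xy: "x < N" "y < N"
    using assms unfolding adj_def by auto
  consider "cdist N x y = 1" | "cdist N x y \<noteq> 1" "(min x y, max x y) \<in> S"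
    using assms unfolding adj_def by auto
  then have "g x = g y \<or> y = Suc x \<or> x = Suc y"
  proof cases
    case 1
    have "g 0 = g (N - 1)"
      using test_fun_low[of 0] test_fun_high[of "N - 1"] six_L_less_N by simp
    then show ?thesis
      using cdist_eq_1_cases[OF xy 1] by auto
  next
    case 2
    then have "g (min x y) = g (max x y)"
      by (intro test_fun_long_edge) (auto simp: min_def max_def cdist_commute)
    then show ?thesis
      by (cases "x \<le> y") (auto simp: min_def max_def)
  qed
  then show ?thesis
    using test_fun_Suc[of x] test_fun_Suc[of y] jump_sq_nonneg[of x] jump_sq_nonneg[of y]
    by (auto simp: power2_commute)
qed

lemma sum_of_bool_eq_Suc_le: "0 \<le> c \<Longrightarrow> (\<Sum>y<n. of_bool (y = Suc x) * c) \<le> (c :: real)"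
  by (cases "Suc x < n") auto

lemma sum_jump_sq_le: "(\<Sum>x<N. jump_sq x) \<le> 4 / k\<^sub>1 + 4 / k\<^sub>2"
proof -
  have "(\<Sum>x<N. jump_sq x) =
      4 * real (card ({..<N} \<inter> left_cuts N S)) / k\<^sub>1\<^sup>2 + 4 * real (card ({..<N} \<inter> right_cuts N S)) / k\<^sub>2\<^sup>2"
    unfolding jump_sq_def
    by (simp add: sum.distrib Int_def flip: sum_divide_distrib sum_distrib_left)
  also have "\<dots> \<le> 4 * k\<^sub>1 / k\<^sub>1\<^sup>2 + 4 * k\<^sub>2 / k\<^sub>2\<^sup>2"
    by (intro add_mono divide_right_mono mult_left_mono) (auto simp: card_mono)
  also have "\<dots> = 4 / k\<^sub>1 + 4 / k\<^sub>2"
    using k1_pos k2_pos by (simp add: power2_eq_square)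
  finally show ?thesis .
qed

lemma sum_adj_test_fun_sq_le:
  "(\<Sum>x<N. \<Sum>y<N. of_bool (adj N S x y) * (g x - g y)\<^sup>2) \<le> 8 / k\<^sub>1 + 8 / k\<^sub>2"
proof -
  have "(\<Sum>x<N. \<Sum>y<N. of_bool (adj N S x y) * (g x - g y)\<^sup>2) \<le>
      (\<Sum>x<N. \<Sum>y<N. of_bool (y = Suc x) * jump_sq x) + (\<Sum>x<N. \<Sum>y<N. of_bool (x = Suc y) * jump_sq y)"
    unfolding sum.distrib[symmetric] by (intro sum_mono) (auto simp: test_fun_adj_sq_le jump_sq_nonneg)
  moreover have "(\<Sum>x<N. \<Sum>y<N. of_bool (y = Suc x) * jump_sq x) \<le> (\<Sum>x<N. jump_sq x)"
    by (intro sum_mono sum_of_bool_eq_Suc_le jump_sq_nonneg)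
  moreover have "(\<Sum>x<N. \<Sum>y<N. of_bool (x = Suc y) * jump_sq y) \<le> (\<Sum>y<N. jump_sq y)"
    by (subst sum.swap) (intro sum_mono sum_of_bool_eq_Suc_le jump_sq_nonneg)
  ultimately show ?thesis
    using sum_jump_sq_le by simp
qed

lemma dirichlet_energy_test_fun_le: "dirichlet_energy g \<le> (2 / k\<^sub>1 + 2 / k\<^sub>2) / real N"
proof -
  have "\<pi> x * P x y * (g x - g y)\<^sup>2 = of_bool (adj N S x y) * (g x - g y)\<^sup>2 / (2 * real vol)"
    if "x < N" for x y
    using stat_lazyP_offdiag[OF _ that, of y] by (cases "x = y") auto
  then have "(\<Sum>x<N. \<Sum>y<N. \<pi> x * P x y * (g x - g y)\<^sup>2)
      = (\<Sum>x<N. \<Sum>y<N. of_bool (adj N S x y) * (g x - g y)\<^sup>2) / (2 * real vol)"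
    unfolding sum_divide_distrib by (intro sum.cong refl) simp
  then have "dirichlet_energy g = (\<Sum>x<N. \<Sum>y<N. of_bool (adj N S x y) * (g x - g y)\<^sup>2) / (4 * real vol)"
    unfolding dirichlet_energy_def by simp
  also have "\<dots> \<le> (8 / k\<^sub>1 + 8 / k\<^sub>2) / (4 * real vol)"
    using vol_pos by (intro divide_right_mono sum_adj_test_fun_sq_le) simp
  also have "\<dots> = (2 / k\<^sub>1 + 2 / k\<^sub>2) / real vol"
    using vol_pos k1_pos k2_pos by (simp add: field_simps)
  also have "\<dots> \<le> (2 / k\<^sub>1 + 2 / k\<^sub>2) / real N"
    using N_le_vol two_le_N k1_pos k2_pos by (intro divide_left_mono) simp_all
  finally show ?thesis .
qed

lemma stat_variance_test_fun_ge: "2 * real L / real vol \<le> stat_variance g"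
proof -
  define m where "m = stat_mean g"
  define c where "c = real (L + 1) / real vol"
  define U where "U = {2 * L..5 * L}"
  define D where "D = {..L}"
  have A: "U \<subseteq> {..<N}" "D \<subseteq> {..<N}" "U \<inter> D = {}"
    unfolding U_def D_def using six_L_less_N two_le_L by auto
  have "c \<le> real (card U) / real vol"
    unfolding c_def U_def using vol_pos by (intro divide_right_mono) auto
  then have c_plus: "c \<le> (\<Sum>x\<in>U. \<pi> x)"
    using sum_stat_ge_card[OF A(1)] by linarith
  have c_minus: "c \<le> (\<Sum>x\<in>D. \<pi> x)"
    using sum_stat_ge_card[OF A(2)] unfolding c_def D_def by simp
  have "2 * real L / real vol \<le> c * (2 + 2 * m\<^sup>2)"
    unfolding c_def using vol_pos by (simp add: divide_right_mono field_simps)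
  also have "\<dots> = c * (1 - m)\<^sup>2 + c * (1 + m)\<^sup>2"
    by (simp add: power2_eq_square algebra_simps)
  also have "\<dots> \<le> (\<Sum>x\<in>U. \<pi> x) * (1 - m)\<^sup>2 + (\<Sum>x\<in>D. \<pi> x) * (1 + m)\<^sup>2"
    using c_plus c_minus by (intro add_mono mult_right_mono) auto
  also have "\<dots> = (\<Sum>x\<in>U \<union> D. \<pi> x * (g x - m)\<^sup>2)"
    using A(3) test_fun_mid test_fun_low power2_minus[of "1 + m"]
    by (simp add: sum.union_disjoint sum_distrib_right U_def D_def)
  also have "\<dots> \<le> (\<Sum>x<N. \<pi> x * (g x - m)\<^sup>2)"
    using A by (intro sum_mono2) (auto intro: mult_nonneg_nonneg stat_nonneg)
  also have "\<dots> = stat_variance g"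
    unfolding stat_variance_def stat_inner_def m_def by (simp add: power2_eq_square mult.assoc)
  finally show ?thesis .
qed

lemma stat_variance_test_fun_ge_sparse:
  assumes "0 \<le> K" and "real (card S) \<le> K * real N"
  shows "1 / (8 * (4 + 2 * K)) \<le> stat_variance g"
proof -
  have "0 < 4 + 2 * K" "0 < real N" "0 < (4 + 2 * K) * real N"
    using sixteen_le_N assms(1) by simp_all
  then have "1 / (8 * (4 + 2 * K)) = 2 * (real N / 16) / ((4 + 2 * K) * real N)"
    by (simp add: field_simps)
  also have "\<dots> \<le> 2 * real L / real vol"
    using vol_le_card_S[OF S_subset] assms(2) vol_pos sixteen_le_N
    by (intro frac_le) (auto simp: block_len_def algebra_simps)
  also have "\<dots> \<le> stat_variance g"
    by (rule stat_variance_test_fun_ge)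
  finally show ?thesis .
qed

lemma dirichlet_energy_test_fun_le_many_cuts:
  assumes "0 < \<delta>" and "\<delta> * real N \<le> k\<^sub>1" and "\<delta> * real N \<le> k\<^sub>2"
  shows "dirichlet_energy g \<le> 4 / (\<delta> * real N ^ 2)"
proof -
  have "2 / k\<^sub>1 \<le> 2 / (\<delta> * real N)" "2 / k\<^sub>2 \<le> 2 / (\<delta> * real N)"
    using assms sixteen_le_N k1_pos k2_pos by (auto intro!: divide_left_mono mult_pos_pos)
  then have "(2 / k\<^sub>1 + 2 / k\<^sub>2) / real N \<le> (4 / (\<delta> * real N)) / real N"
    by (intro divide_right_mono) auto
  then show ?thesis
    using dirichlet_energy_test_fun_le by (simp add: power2_eq_square)
qed

lemma mixing_time_ge:
  assumes \<delta>: "0 < \<delta>" and K: "0 \<le> K" and k: "4 / 4 ^ k \<le> 1 / (16 * (4 + 2 * K))"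
    and left: "\<delta> * real N \<le> k\<^sub>1" and right: "\<delta> * real N \<le> k\<^sub>2"
    and edges: "real (card S) \<le> K * real N"
  shows "\<delta> / (128 * (4 + 2 * K) * real k) * real N ^ 2 \<le> real (mixing_time N S)"
proof -
  define v where "v = 1 / (8 * (4 + 2 * K))"
  define T where "T = real (mixing_time N S)"
  have "k \<noteq> 0"
  proof
    assume "k = 0"
    then show False
      using k K by (simp add: field_simps)
  qed
  have "v \<le> 2 * real k * T * dirichlet_energy g + v / 2"
    using stat_variance_test_fun_ge_sparse[OF K edges] stat_variance_le_mixing_time_energy[of g k]
      abs_test_fun_le k unfolding T_def v_def by simp
  also have "\<dots> \<le> 2 * real k * T * (4 / (\<delta> * real N ^ 2)) + v / 2"
    using dirichlet_energy_test_fun_le_many_cuts[OF \<delta> left right] unfolding T_def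
    by (intro add_right_mono mult_left_mono) auto
  finally have "v / 2 * (\<delta> * real N ^ 2) \<le> 8 * real k * T"
    using \<delta> sixteen_le_N by (simp add: field_simps)
  then have "v / 2 * (\<delta> * real N ^ 2) / (8 * real k) \<le> T"
    using \<open>k \<noteq> 0\<close> by (simp add: pos_divide_le_eq mult.commute)
  moreover have "v / 2 * (\<delta> * real N ^ 2) / (8 * real k) = \<delta> / (128 * (4 + 2 * K) * real k) * real N ^ 2"
    unfolding v_def by simp
  ultimately show ?thesis
    unfolding T_def by simp
qed

end

theorem mixing_time_ge_quadratic:
  fixes \<delta> K :: real
  assumes "0 < \<delta>" and "0 \<le> K"
  obtains c where "0 < c"
    and "\<And>N S. 16 \<le> N \<Longrightarrow> S \<subseteq> vpairs N \<Longrightarrow> \<delta> * real N \<le> real (card (left_cuts N S)) \<Longrightarrow>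
      \<delta> * real N \<le> real (card (right_cuts N S)) \<Longrightarrow> real (card S) \<le> K * real N \<Longrightarrow>
      c * real N ^ 2 \<le> real (mixing_time N S)"
proof -
  obtain k where k: "64 * (4 + 2 * K) < 4 ^ k"
    using real_arch_pow[of 4 "64 * (4 + 2 * K)"] by auto
  then have "k \<noteq> 0"
    using assms by (auto intro: Nat.gr0I)
  have "4 / 4 ^ k \<le> 1 / (16 * (4 + 2 * K))"
    using k assms by (simp add: field_simps)
  then show ?thesis
  proof (intro that[of "\<delta> / (128 * (4 + 2 * K) * real k)"])
    fix N S
    assume N: "16 \<le> N" and S: "S \<subseteq> vpairs N"
      and left: "\<delta> * real N \<le> real (card (left_cuts N S))"
      and right: "\<delta> * real N \<le> real (card (right_cuts N S))"
      and edges: "real (card S) \<le> K * real N"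
    have "0 < \<delta> * real N"
      using \<open>0 < \<delta>\<close> N by simp
    then have "left_cuts N S \<noteq> {}" "right_cuts N S \<noteq> {}"
      using left right by auto
    then interpret test_fun_setup N S
      using N S by unfold_locales
    show "\<delta> / (128 * (4 + 2 * K) * real k) * real N ^ 2 \<le> real (mixing_time N S)"
      by (rule mixing_time_ge) (use assms left right edges \<open>4 / 4 ^ k \<le> _\<close> in auto)
  qed (use assms \<open>k \<noteq> 0\<close> in simp)
qed

section \<open>Estimates for the random graph\<close>

lemma finite_vpairs [simp]: "finite (vpairs N)"
  by (rule finite_subset[of _ "{..<N} \<times> {..<N}"]) (auto simp: vpairs_def)

lemma card_vpairs_le: "card (vpairs N) \<le> N\<^sup>2"
proof -
  have "card (vpairs N) \<le> card ({..<N} \<times> {..<N})"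
    by (intro card_mono) (auto simp: vpairs_def)
  then show ?thesis
    by (simp add: power2_eq_square)
qed

lemma cdist_vpairs: "(x, y) \<in> vpairs N \<Longrightarrow> cdist N x y = min (y - x) (N - (y - x))"
  unfolding vpairs_def cdist_def by auto

definition blockers :: "nat \<Rightarrow> nat \<Rightarrow> (nat \<times> nat) set" where
  "blockers N k = {(x, y). cdist N x y \<noteq> 1 \<and> x \<le> k \<and> k < y \<and> \<not> (x < block_len N \<and> 6 * block_len N \<le> y)}"

lemma good_cut_iff_disjoint_blockers: "good_cut N X k \<longleftrightarrow> X \<inter> blockers N k = {}"
  unfolding good_cut_def blockers_def by auto

lemma cdist_blocker_ge:
  assumes "(x, y) \<in> vpairs N" "(x, y) \<in> blockers N k"
  shows "min (y - x) (block_len N) \<le> cdist N x y"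
proof -
  have "x < y" "y < N" "block_len N \<le> x \<or> y < 6 * block_len N"
    using assms unfolding vpairs_def blockers_def by auto
  then have "block_len N \<le> N - (y - x)"
    unfolding block_len_def by auto
  then show ?thesis
    unfolding cdist_vpairs[OF assms(1)] by auto
qed

lemma card_short_vpairs_le:
  assumes "0 \<le> R"
  shows "real (card {e \<in> vpairs N. real (snd e - fst e) \<le> R}) \<le> real N * R"
proof -
  have "{e \<in> vpairs N. real (snd e - fst e) \<le> R} \<subseteq> (\<lambda>(x, j). (x, x + j)) ` ({..<N} \<times> {1..nat \<lfloor>R\<rfloor>})"
  proof
    fix e assume "e \<in> {e \<in> vpairs N. real (snd e - fst e) \<le> R}"
    then obtain x y where "e = (x, y)" "x < y" "y < N" "real (y - x) \<le> R"
      unfolding vpairs_def by auto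
    moreover from this have "y - x \<le> nat \<lfloor>R\<rfloor>"
      by (simp add: le_nat_floor)
    ultimately show "e \<in> (\<lambda>(x, j). (x, x + j)) ` ({..<N} \<times> {1..nat \<lfloor>R\<rfloor>})"
      by (auto intro!: image_eqI[of _ _ "(x, y - x)"])
  qed
  then have "card {e \<in> vpairs N. real (snd e - fst e) \<le> R}
      \<le> card ((\<lambda>(x, j). (x, x + j)) ` ({..<N} \<times> {1..nat \<lfloor>R\<rfloor>}))"
    by (intro card_mono) auto
  also have "\<dots> \<le> card ({..<N} \<times> {1..nat \<lfloor>R\<rfloor>})"
    by (rule card_image_le) simp
  finally have "card {e \<in> vpairs N. real (snd e - fst e) \<le> R} \<le> card ({..<N} \<times> {1..nat \<lfloor>R\<rfloor>})" .
  then have "real (card {e \<in> vpairs N. real (snd e - fst e) \<le> R}) \<le> real N * real (nat \<lfloor>R\<rfloor>)"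
    by (simp flip: of_nat_mult)
  also have "\<dots> \<le> real N * R"
    using assms by (intro mult_left_mono) auto
  finally show ?thesis .
qed

locale long_range_percolation =
  fixes s \<beta> :: real
  assumes two_less_s: "2 < s" and beta_pos: "0 < \<beta>"
begin

definition half_zeta :: real where
  "half_zeta = (\<Sum>n. real n powr (- s / 2))"

lemma summable_half_zeta: "summable (\<lambda>n. real n powr (- s / 2))"
  using two_less_s by (subst summable_real_powr_iff) simp

lemma sum_inj_le_half_zeta:
  assumes "finite A" "inj_on h A"
  shows "(\<Sum>x\<in>A. real (h x) powr (- s / 2)) \<le> half_zeta"
  using sum_le_suminf[OF summable_half_zeta, of "h ` A"] assms
  unfolding half_zeta_def by (simp add: sum.reindex)

lemma half_zeta_nonneg: "0 \<le> half_zeta"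
  using sum_inj_le_half_zeta[of "{}"] by simp

lemma powr_le_powr_half: "1 \<le> n \<Longrightarrow> real n powr (- s) \<le> real n powr (- s / 2)"
  using two_less_s by (intro powr_mono) auto

lemma powr_add_minus_1_le:
  assumes "1 \<le> a" "1 \<le> b"
  shows "real (a + b - 1) powr (- s) \<le> real a powr (- s / 2) * real b powr (- s / 2)"
proof -
  let ?c = "real (a + b - 1)"
  have "0 < ?c"
    using assms by simp
  have "real a * real b \<le> ?c\<^sup>2"
    unfolding power2_eq_square using assms by (intro mult_mono) auto
  have "?c powr (- s) = (?c powr 2) powr (- s / 2)"
    by (simp only: powr_powr) simp
  also have "\<dots> = (?c\<^sup>2) powr (- s / 2)"
    using powr_realpow[OF \<open>0 < ?c\<close>, of 2] by simp
  also have "\<dots> \<le> (real a * real b) powr (- s / 2)"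
    using \<open>real a * real b \<le> ?c\<^sup>2\<close> assms two_less_s by (intro powr_mono2') auto
  finally show ?thesis
    by (simp add: powr_mult)
qed

text \<open>Writing \<open>y - x = (k + 1 - x) + (y - k) - 1\<close> factorises the double sum; this is where
  \<open>s > 2\<close> is needed.\<close>

lemma sum_crossing_powr_le:
  "(\<Sum>x\<le>k. \<Sum>y\<in>{k<..<N}. real (y - x) powr (- s)) \<le> half_zeta\<^sup>2"
proof -
  have "(\<Sum>x\<le>k. \<Sum>y\<in>{k<..<N}. real (y - x) powr (- s))
      \<le> (\<Sum>x\<le>k. \<Sum>y\<in>{k<..<N}. real (Suc k - x) powr (- s / 2) * real (y - k) powr (- s / 2))"
  proof (intro sum_mono)
    fix x y assume "x \<in> {..k}" "y \<in> {k<..<N}"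
    then have "y - x = (Suc k - x) + (y - k) - 1" "1 \<le> Suc k - x" "1 \<le> y - k"
      by auto
    then show "real (y - x) powr (- s) \<le> real (Suc k - x) powr (- s / 2) * real (y - k) powr (- s / 2)"
      by (metis powr_add_minus_1_le)
  qed
  also have "\<dots> = (\<Sum>x\<le>k. real (Suc k - x) powr (- s / 2)) * (\<Sum>y\<in>{k<..<N}. real (y - k) powr (- s / 2))"
    by (simp add: sum_product)
  also have "\<dots> \<le> half_zeta * half_zeta"
    by (intro mult_mono sum_inj_le_half_zeta sum_nonneg half_zeta_nonneg inj_onI) auto
  finally show ?thesis
    by (simp add: power2_eq_square)
qed

lemma powr_le_min:
  assumes "1 \<le> a" "1 \<le> b" "min a b \<le> c"
  shows "(c::real) powr (- s) \<le> a powr (- s) + b powr (- s)"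
proof -
  have "c powr (- s) \<le> (min a b) powr (- s)"
    using assms two_less_s by (intro powr_mono2') auto
  then show ?thesis
    by (cases "a \<le> b") (simp_all add: min_def add_increasing2 add_increasing)
qed

lemma powr_two_minus_le:
  assumes "1 \<le> a" "1 \<le> R"
  shows "(a::real) powr (2 - s) \<le> of_bool (a \<le> R) + R powr (2 - s)"
proof (cases "a \<le> R")
  case True
  have "a powr (2 - s) \<le> 1 powr (2 - s)"
    using assms two_less_s by (intro powr_mono2') auto
  then show ?thesis
    using True by (simp add: add_increasing2)
next
  case False
  then have "a powr (2 - s) \<le> R powr (2 - s)"
    using assms two_less_s by (intro powr_mono2') auto
  then show ?thesis
    using False by simp
qed

definition edge_weight :: "nat \<Rightarrow> nat \<times> nat \<Rightarrow> real" where
  "edge_weight N e = real (cdist N (fst e) (snd e)) powr (- s)"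

definition weight_sum :: "nat \<Rightarrow> (nat \<times> nat) set \<Rightarrow> real" where
  "weight_sum N B = (\<Sum>e\<in>vpairs N \<inter> B. edge_weight N e)"

lemma edge_weight_nonneg: "0 \<le> edge_weight N e"
  unfolding edge_weight_def by simp

lemma weight_sum_nonneg: "0 \<le> weight_sum N B"
  unfolding weight_sum_def by (intro sum_nonneg edge_weight_nonneg)

lemma weight_sum_mono: "B \<subseteq> C \<Longrightarrow> weight_sum N B \<le> weight_sum N C"
  unfolding weight_sum_def by (intro sum_mono2 edge_weight_nonneg) auto

lemma weight_sum_Un: "weight_sum N (B \<union> C) = weight_sum N B + weight_sum N C - weight_sum N (B \<inter> C)"
  unfolding weight_sum_def
  using sum.union_inter[of "vpairs N \<inter> B" "vpairs N \<inter> C" "edge_weight N"]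
  by (simp add: Int_Un_distrib Int_assoc Int_left_commute)

lemma one_minus_edge_prob: "1 - edge_prob s \<beta> N e = exp (- \<beta> * edge_weight N e)"
  unfolding edge_prob_def edge_weight_def by simp

lemma edge_prob_nonneg: "0 \<le> edge_prob s \<beta> N e"
proof -
  have "0 \<le> \<beta> * edge_weight N e"
    using beta_pos edge_weight_nonneg by simp
  then have "exp (- \<beta> * edge_weight N e) \<le> 1"
    by simp
  then show ?thesis
    using one_minus_edge_prob[of N e] by linarith
qed

lemma edge_prob_le_1: "edge_prob s \<beta> N e \<le> 1"
  using one_minus_edge_prob[of N e] by (smt (verit) exp_gt_zero)

lemma edge_prob_le: "edge_prob s \<beta> N e \<le> \<beta> * edge_weight N e"
  using exp_ge_add_one_self[of "- \<beta> * edge_weight N e"] one_minus_edge_prob[of N e] by linarith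

sublocale G: random_subset "vpairs N" "edge_prob s \<beta> N" for N
  by unfold_locales (simp_all add: edge_prob_nonneg edge_prob_le_1)

lemma graph_prob_eq: "graph_prob s \<beta> N A = G.prob N A"
  unfolding graph_prob_def G.prob_eq_sum G.weight_def ..

lemma expectation_avoids_eq: "G.expectation N (\<lambda>X. of_bool (X \<inter> B = {})) = exp (- \<beta> * weight_sum N B)"
  unfolding G.expectation_avoids one_minus_edge_prob weight_sum_def
  by (simp add: exp_sum sum_distrib_left)

lemma exp_minus_one_le: "0 \<le> (u::real) \<Longrightarrow> exp u - 1 \<le> u * exp u"
  using exp_ge_add_one_self[of "- u"] mult_right_mono[of "1 - u" "exp (- u)" "exp u"]
  by (simp add: algebra_simps exp_minus_inverse)

lemma covariance_avoids_le:
  assumes "weight_sum N (B \<inter> C) \<le> M"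
  shows "G.expectation N (\<lambda>X. of_bool (X \<inter> B = {}) * of_bool (X \<inter> C = {}))
      - G.expectation N (\<lambda>X. of_bool (X \<inter> B = {})) * G.expectation N (\<lambda>X. of_bool (X \<inter> C = {}))
    \<le> \<beta> * exp (\<beta> * M) * weight_sum N (B \<inter> C)"
proof -
  define u where "u = \<beta> * weight_sum N (B \<inter> C)"
  define v where "v = - \<beta> * (weight_sum N B + weight_sum N C)"
  have "0 \<le> u" "v \<le> 0"
    unfolding u_def v_def using beta_pos weight_sum_nonneg by simp_all
  have "(\<lambda>X. of_bool (X \<inter> B = {}) * of_bool (X \<inter> C = {})) = (\<lambda>X. of_bool (X \<inter> (B \<union> C) = {}) :: real)"
    by (rule ext) (simp add: Int_Un_distrib)
  moreover have "- \<beta> * weight_sum N (B \<union> C) = v + u"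
    unfolding u_def v_def weight_sum_Un by (simp add: algebra_simps)
  moreover have "exp (- \<beta> * weight_sum N B) * exp (- \<beta> * weight_sum N C) = exp v"
    unfolding v_def by (simp add: algebra_simps flip: exp_add)
  ultimately have "G.expectation N (\<lambda>X. of_bool (X \<inter> B = {}) * of_bool (X \<inter> C = {}))
      - G.expectation N (\<lambda>X. of_bool (X \<inter> B = {})) * G.expectation N (\<lambda>X. of_bool (X \<inter> C = {}))
      = exp v * (exp u - 1)"
    by (simp add: expectation_avoids_eq exp_add right_diff_distrib)
  also have "\<dots> \<le> exp u - 1"
    using \<open>0 \<le> u\<close> \<open>v \<le> 0\<close> by (intro mult_left_le_one_le) auto
  also have "\<dots> \<le> u * exp u"
    using exp_minus_one_le[OF \<open>0 \<le> u\<close>] .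
  also have "\<dots> \<le> u * exp (\<beta> * M)"
    using assms \<open>0 \<le> u\<close> beta_pos unfolding u_def by (intro mult_left_mono) auto
  finally show ?thesis
    unfolding u_def by (simp add: mult_ac)
qed

lemma edge_weight_blocker_le:
  assumes "16 \<le> N" "e \<in> vpairs N" "e \<in> blockers N k"
  shows "edge_weight N e \<le> real (snd e - fst e) powr (- s) + real (block_len N) powr (- s)"
proof -
  obtain x y where e: "e = (x, y)" "x < y"
    using assms(2) unfolding vpairs_def by auto
  have "1 \<le> block_len N"
    unfolding block_len_def using assms(1) by simp
  moreover have "min (real (y - x)) (real (block_len N)) \<le> real (cdist N x y)"
    using cdist_blocker_ge[of x y N k] assms(2,3) e by simp
  ultimately show ?thesis
    unfolding edge_weight_def e using e(2) by (intro powr_le_min) auto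
qed

lemma weight_sum_blockers_le:
  assumes "16 \<le> N"
  shows "weight_sum N (blockers N k) \<le> half_zeta\<^sup>2 + real N ^ 2 * real (block_len N) powr (- s)"
proof -
  let ?V = "vpairs N \<inter> blockers N k"
  have "weight_sum N (blockers N k) \<le> (\<Sum>e\<in>?V. real (snd e - fst e) powr (- s) + real (block_len N) powr (- s))"
    unfolding weight_sum_def using edge_weight_blocker_le[OF assms] by (intro sum_mono) auto
  also have "\<dots> = (\<Sum>e\<in>?V. real (snd e - fst e) powr (- s)) + real (card ?V) * real (block_len N) powr (- s)"
    by (simp add: sum.distrib)
  also have "(\<Sum>e\<in>?V. real (snd e - fst e) powr (- s)) \<le> (\<Sum>e\<in>{..k} \<times> {k<..<N}. real (snd e - fst e) powr (- s))"
    by (rule sum_mono2) (auto simp: vpairs_def blockers_def)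
  also have "\<dots> = (\<Sum>x\<le>k. \<Sum>y\<in>{k<..<N}. real (y - x) powr (- s))"
    by (simp only: sum.cartesian_product) (simp add: split_beta)
  also have "\<dots> \<le> half_zeta\<^sup>2"
    by (rule sum_crossing_powr_le)
  also have "real (card ?V) \<le> real N ^ 2"
    using card_mono[of "vpairs N" ?V] card_vpairs_le[of N] by simp
  finally show ?thesis
    by (simp add: mult_right_mono)
qed

lemma num_crossings_le:
  assumes "W \<subseteq> {..<N}" "(x, y) \<in> vpairs N"
  shows "(\<Sum>k\<in>W. of_bool ((x, y) \<in> blockers N k)) \<le> real N"
    and "(\<Sum>k\<in>W. of_bool ((x, y) \<in> blockers N k)) \<le> real (y - x)"
proof -
  have "finite W"
    using assms(1) finite_subset by blast
  have "(\<Sum>k\<in>W. of_bool ((x, y) \<in> blockers N k)) \<le> (real (card W) :: real)"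
    using sum_mono[of W "\<lambda>k. of_bool ((x, y) \<in> blockers N k) :: real" "\<lambda>_. 1"] by simp
  also have "\<dots> \<le> real N"
    using card_mono[OF _ assms(1)] by simp
  finally show "(\<Sum>k\<in>W. of_bool ((x, y) \<in> blockers N k)) \<le> real N" .
  have "(\<Sum>k\<in>W. of_bool ((x, y) \<in> blockers N k)) \<le> (\<Sum>k\<in>W. of_bool (k \<in> {x..<y}) :: real)"
    by (intro sum_mono) (auto simp: blockers_def)
  also have "\<dots> = real (card (W \<inter> {x..<y}))"
    using \<open>finite W\<close> by (simp add: Int_def)
  also have "\<dots> \<le> real (y - x)"
    using card_mono[of "{x..<y}" "W \<inter> {x..<y}"] by simp
  finally show "(\<Sum>k\<in>W. of_bool ((x, y) \<in> blockers N k)) \<le> real (y - x)" .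
qed

text \<open>An edge of length \<open>d\<close> crosses at most \<open>d\<close> cuts, so its contribution to the variance is at
  most \<open>d\<^sup>2 d\<^sup>-\<^sup>s\<close>; edges shorter than the cutoff \<open>R\<close> are simply counted.\<close>

lemma crossings_sq_edge_weight_le:
  assumes "16 \<le> N" "W \<subseteq> {..<N}" "1 \<le> R" "e \<in> vpairs N"
  shows "(\<Sum>k\<in>W. of_bool (e \<in> blockers N k))\<^sup>2 * edge_weight N e
    \<le> of_bool (real (snd e - fst e) \<le> R) + R powr (2 - s) + real N ^ 2 * real (block_len N) powr (- s)"
proof -
  let ?c = "\<Sum>k\<in>W. of_bool (e \<in> blockers N k) :: real"
  obtain x y where e: "e = (x, y)" "x < y" "y < N"
    using assms(4) unfolding vpairs_def by auto
  have "0 \<le> ?c"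
    by (intro sum_nonneg) auto
  have "?c \<le> real N" "?c \<le> real (y - x)"
    using num_crossings_le[OF assms(2)] assms(4) unfolding e(1) by auto
  show ?thesis
  proof (cases "\<exists>k\<in>W. e \<in> blockers N k")
    case False
    then have "?c = 0"
      by (intro sum.neutral) auto
    then show ?thesis
      by (simp add: add_nonneg_nonneg)
  next
    case True
    then have "edge_weight N e \<le> real (y - x) powr (- s) + real (block_len N) powr (- s)"
      using edge_weight_blocker_le[OF assms(1,4)] e by auto
    then have "?c\<^sup>2 * edge_weight N e \<le> ?c\<^sup>2 * real (y - x) powr (- s) + ?c\<^sup>2 * real (block_len N) powr (- s)"
      by (simp add: mult_left_mono distrib_left[symmetric])
    also have "?c\<^sup>2 * real (y - x) powr (- s) \<le> real (y - x) ^ 2 * real (y - x) powr (- s)"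
      using \<open>0 \<le> ?c\<close> \<open>?c \<le> real (y - x)\<close> by (intro mult_right_mono power_mono) auto
    also have "real (y - x) ^ 2 * real (y - x) powr (- s) = real (y - x) powr (2 - s)"
      using e powr_add[of "real (y - x)" 2 "- s"] powr_realpow[of "real (y - x)" 2] by simp
    also have "\<dots> \<le> of_bool (real (y - x) \<le> R) + R powr (2 - s)"
      using e assms(3) by (intro powr_two_minus_le) auto
    also have "?c\<^sup>2 * real (block_len N) powr (- s) \<le> real N ^ 2 * real (block_len N) powr (- s)"
      using \<open>0 \<le> ?c\<close> \<open>?c \<le> real N\<close> by (intro mult_right_mono power_mono) auto
    finally show ?thesis
      using e by simp
  qed
qed

lemma sum_weight_sum_blockers_le:
  assumes "16 \<le> N" "W \<subseteq> {..<N}" "1 \<le> R"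
  shows "(\<Sum>k\<in>W. \<Sum>l\<in>W. weight_sum N (blockers N k \<inter> blockers N l))
    \<le> real N * R + real N ^ 2 * R powr (2 - s) + real N ^ 2 * (real N ^ 2 * real (block_len N) powr (- s))"
proof -
  let ?V = "vpairs N"
  let ?c = "\<lambda>e. \<Sum>k\<in>W. of_bool (e \<in> blockers N k) :: real"
  have "(\<Sum>k\<in>W. \<Sum>l\<in>W. weight_sum N (blockers N k \<inter> blockers N l))
      = (\<Sum>k\<in>W. \<Sum>l\<in>W. \<Sum>e\<in>?V. of_bool (e \<in> blockers N k) * of_bool (e \<in> blockers N l) * edge_weight N e)"
    unfolding weight_sum_def sum.inter_restrict[OF finite_vpairs] by (intro sum.cong refl) auto
  also have "\<dots> = (\<Sum>k\<in>W. \<Sum>e\<in>?V. \<Sum>l\<in>W. of_bool (e \<in> blockers N k) * of_bool (e \<in> blockers N l) * edge_weight N e)"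
    by (intro sum.cong refl) (rule sum.swap)
  also have "\<dots> = (\<Sum>e\<in>?V. \<Sum>k\<in>W. \<Sum>l\<in>W. of_bool (e \<in> blockers N k) * of_bool (e \<in> blockers N l) * edge_weight N e)"
    by (rule sum.swap)
  also have "\<dots> = (\<Sum>e\<in>?V. (?c e)\<^sup>2 * edge_weight N e)"
    by (intro sum.cong refl) (simp only: power2_eq_square sum_product, simp only: sum_distrib_right)
  also have "\<dots> \<le> (\<Sum>e\<in>?V. of_bool (real (snd e - fst e) \<le> R)
      + (R powr (2 - s) + real N ^ 2 * real (block_len N) powr (- s)))"
    using crossings_sq_edge_weight_le[OF assms] by (intro sum_mono) (simp add: add.assoc)
  also have "\<dots> = real (card {e \<in> ?V. real (snd e - fst e) \<le> R})
      + real (card ?V) * (R powr (2 - s) + real N ^ 2 * real (block_len N) powr (- s))"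
    by (simp add: sum.distrib Int_def)
  also have "\<dots> \<le> real N * R + real N ^ 2 * (R powr (2 - s) + real N ^ 2 * real (block_len N) powr (- s))"
    using card_short_vpairs_le[of R N] card_vpairs_le[of N] assms(3)
    by (intro add_mono mult_right_mono) (simp_all flip: of_nat_power)
  finally show ?thesis
    by (simp add: algebra_simps)
qed

definition good_prob_lb :: real where
  "good_prob_lb = exp (- \<beta> * (half_zeta\<^sup>2 + 1))"

lemma good_prob_lb_pos: "0 < good_prob_lb"
  unfolding good_prob_lb_def by simp

lemma weight_sum_blockers_le_half_zeta:
  assumes "16 \<le> N" "real N ^ 2 * real (block_len N) powr (- s) \<le> 1"
  shows "weight_sum N (blockers N k) \<le> half_zeta\<^sup>2 + 1"
  using weight_sum_blockers_le[OF assms(1), of k] assms(2) by simp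

lemma expectation_good_cut_ge:
  assumes "16 \<le> N" "real N ^ 2 * real (block_len N) powr (- s) \<le> 1"
  shows "good_prob_lb \<le> G.expectation N (\<lambda>X. of_bool (X \<inter> blockers N k = {}))"
  unfolding expectation_avoids_eq good_prob_lb_def
  using weight_sum_blockers_le_half_zeta[OF assms, of k] beta_pos by simp

lemma card_good_cuts_eq_sum:
  "finite W \<Longrightarrow> real (card {k \<in> W. good_cut N X k}) = (\<Sum>k\<in>W. of_bool (X \<inter> blockers N k = {}))"
  by (simp add: good_cut_iff_disjoint_blockers Int_def)

lemma variance_good_cuts_le:
  assumes "16 \<le> N" "real N ^ 2 * real (block_len N) powr (- s) \<le> 1"
    and "W \<subseteq> {..<N}" "1 \<le> R"
  defines "num_good \<equiv> \<lambda>X. real (card {k \<in> W. good_cut N X k})"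
  shows "G.expectation N (\<lambda>X. (num_good X - G.expectation N num_good)\<^sup>2)
    \<le> \<beta> / good_prob_lb * (real N * R + real N ^ 2 * R powr (2 - s)
        + real N ^ 2 * (real N ^ 2 * real (block_len N) powr (- s)))"
proof -
  let ?f = "\<lambda>k X. of_bool (X \<inter> blockers N k = {}) :: real"
  have "finite W"
    using assms(3) finite_subset by blast
  then have num_good: "num_good = (\<lambda>X. \<Sum>k\<in>W. ?f k X)"
    unfolding num_good_def by (simp add: card_good_cuts_eq_sum)
  have "G.expectation N (\<lambda>X. (num_good X - G.expectation N num_good)\<^sup>2)
      = (\<Sum>k\<in>W. \<Sum>l\<in>W. G.expectation N (\<lambda>X. ?f k X * ?f l X) - G.expectation N (?f k) * G.expectation N (?f l))"
    unfolding num_good G.expectation_sum by (rule G.variance_sum)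
  also have "\<dots> \<le> (\<Sum>k\<in>W. \<Sum>l\<in>W. \<beta> / good_prob_lb * weight_sum N (blockers N k \<inter> blockers N l))"
  proof (intro sum_mono)
    fix k l
    have "weight_sum N (blockers N k \<inter> blockers N l) \<le> half_zeta\<^sup>2 + 1"
      using weight_sum_mono[of "blockers N k \<inter> blockers N l" "blockers N k" N]
        weight_sum_blockers_le_half_zeta[OF assms(1,2), of k] by simp
    moreover have "\<beta> / good_prob_lb = \<beta> * exp (\<beta> * (half_zeta\<^sup>2 + 1))"
      unfolding good_prob_lb_def by (simp add: exp_minus divide_inverse)
    ultimately show "G.expectation N (\<lambda>X. ?f k X * ?f l X) - G.expectation N (?f k) * G.expectation N (?f l)
        \<le> \<beta> / good_prob_lb * weight_sum N (blockers N k \<inter> blockers N l)"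
      by (simp only:) (rule covariance_avoids_le)
  qed
  also have "\<dots> \<le> \<beta> / good_prob_lb * (real N * R + real N ^ 2 * R powr (2 - s)
      + real N ^ 2 * (real N ^ 2 * real (block_len N) powr (- s)))"
    unfolding sum_distrib_left[symmetric] using sum_weight_sum_blockers_le[OF assms(1,3,4)] beta_pos good_prob_lb_pos
    by (intro mult_left_mono) auto
  finally show ?thesis .
qed

lemma prob_few_good_cuts:
  assumes "16 \<le> N" "real N ^ 2 * real (block_len N) powr (- s) \<le> 1"
    and "W \<subseteq> {..<N}" "card W = block_len N" "1 \<le> R"
  shows "G.prob N {X. real (card {k \<in> W. good_cut N X k}) < real (block_len N) * good_prob_lb / 2}
    \<le> \<beta> / good_prob_lb * (real N * R + real N ^ 2 * R powr (2 - s)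
        + real N ^ 2 * (real N ^ 2 * real (block_len N) powr (- s)))
      / (real (block_len N) * good_prob_lb / 2)\<^sup>2"
proof -
  define num_good where "num_good = (\<lambda>X. real (card {k \<in> W. good_cut N X k}))"
  define a where "a = real (block_len N) * good_prob_lb / 2"
  have "finite W"
    using assms(3) finite_subset by blast
  have "0 < a"
    unfolding a_def using assms(1) good_prob_lb_pos by (simp add: block_len_def)
  have "real (card W) * good_prob_lb \<le> (\<Sum>k\<in>W. G.expectation N (\<lambda>X. of_bool (X \<inter> blockers N k = {})))"
    using sum_mono[OF expectation_good_cut_ge[OF assms(1,2)], of W] by simp
  then have "2 * a \<le> G.expectation N num_good"
    unfolding a_def num_good_def assms(4)
    by (simp add: card_good_cuts_eq_sum[OF \<open>finite W\<close>] G.expectation_sum)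
  then have "G.prob N {X. num_good X < a} \<le> G.prob N {X. a \<le> \<bar>num_good X - G.expectation N num_good\<bar>}"
    by (intro G.prob_mono) auto
  also have "\<dots> \<le> G.expectation N (\<lambda>X. (num_good X - G.expectation N num_good)\<^sup>2) / a\<^sup>2"
    by (rule G.chebyshev_inequality[OF \<open>0 < a\<close>])
  also have "\<dots> \<le> \<beta> / good_prob_lb * (real N * R + real N ^ 2 * R powr (2 - s)
      + real N ^ 2 * (real N ^ 2 * real (block_len N) powr (- s))) / a\<^sup>2"
    unfolding num_good_def by (intro divide_right_mono variance_good_cuts_le assms) simp
  finally show ?thesis
    unfolding num_good_def a_def .
qed

lemma sum_row_powr_le:
  "(\<Sum>y\<in>{x<..<N}. real (y - x) powr (- s)) \<le> half_zeta"
  "(\<Sum>y\<in>{x<..<N}. real (N - (y - x)) powr (- s)) \<le> half_zeta"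
proof -
  have "(\<Sum>y\<in>{x<..<N}. real (y - x) powr (- s)) \<le> (\<Sum>y\<in>{x<..<N}. real (y - x) powr (- s / 2))"
    by (intro sum_mono powr_le_powr_half) auto
  also have "\<dots> \<le> half_zeta"
    by (intro sum_inj_le_half_zeta inj_onI) auto
  finally show "(\<Sum>y\<in>{x<..<N}. real (y - x) powr (- s)) \<le> half_zeta" .
  have "(\<Sum>y\<in>{x<..<N}. real (N - (y - x)) powr (- s)) \<le> (\<Sum>y\<in>{x<..<N}. real (N - (y - x)) powr (- s / 2))"
    by (intro sum_mono powr_le_powr_half) auto
  also have "\<dots> \<le> half_zeta"
    by (intro sum_inj_le_half_zeta inj_onI) auto
  finally show "(\<Sum>y\<in>{x<..<N}. real (N - (y - x)) powr (- s)) \<le> half_zeta" .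
qed

lemma sum_edge_weight_le: "(\<Sum>e\<in>vpairs N. edge_weight N e) \<le> 2 * half_zeta * real N"
proof -
  have "(\<Sum>e\<in>vpairs N. edge_weight N e) = (\<Sum>x<N. \<Sum>y\<in>{x<..<N}. edge_weight N (x, y))"
  proof -
    have "vpairs N = (SIGMA x:{..<N}. {x<..<N})"
      unfolding vpairs_def by auto
    then show ?thesis
      by (simp add: sum.Sigma)
  qed
  also have "\<dots> \<le> (\<Sum>x<N. \<Sum>y\<in>{x<..<N}. real (y - x) powr (- s) + real (N - (y - x)) powr (- s))"
  proof (intro sum_mono)
    fix x y assume "x \<in> {..<N}" "y \<in> {x<..<N}"
    then have "(x, y) \<in> vpairs N"
      unfolding vpairs_def by auto
    then show "edge_weight N (x, y) \<le> real (y - x) powr (- s) + real (N - (y - x)) powr (- s)"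
      unfolding edge_weight_def using \<open>y \<in> {x<..<N}\<close>
      by (intro powr_le_min) (auto simp: cdist_vpairs)
  qed
  also have "\<dots> \<le> (\<Sum>x<N. half_zeta + half_zeta)"
    by (intro sum_mono) (simp only: sum.distrib, intro add_mono sum_row_powr_le)
  finally show ?thesis
    by (simp add: mult_ac)
qed

lemma prob_many_edges:
  assumes "1 \<le> N"
  shows "G.prob N {X. (2 * \<beta> * half_zeta + 1) * real N \<le> real (card X)} \<le> 2 * \<beta> * half_zeta / real N"
proof -
  define m where "m = (\<Sum>e\<in>vpairs N. edge_prob s \<beta> N e)"
  have "m \<le> \<beta> * (\<Sum>e\<in>vpairs N. edge_weight N e)"
    unfolding m_def sum_distrib_left by (intro sum_mono edge_prob_le)
  also have "\<dots> \<le> 2 * \<beta> * half_zeta * real N"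
    using sum_edge_weight_le[of N] beta_pos by (simp add: mult_left_mono)
  finally have m: "m \<le> 2 * \<beta> * half_zeta * real N" .
  have "G.prob N {X. (2 * \<beta> * half_zeta + 1) * real N \<le> real (card X)}
      \<le> G.prob N {X. real N \<le> \<bar>real (card X) - G.expectation N (\<lambda>X. real (card X))\<bar>}"
    using m unfolding G.expectation_card m_def[symmetric] by (intro G.prob_mono) (auto simp: algebra_simps)
  also have "\<dots> \<le> G.expectation N (\<lambda>X. (real (card X) - m)\<^sup>2) / (real N)\<^sup>2"
    using G.chebyshev_inequality[where N = N and a = "real N" and f = "\<lambda>X. real (card X)"] assms
    unfolding G.expectation_card m_def by simp
  also have "\<dots> \<le> m / (real N)\<^sup>2"
    using G.variance_card_le[of N] unfolding m_def by (simp add: divide_right_mono)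
  also have "\<dots> \<le> 2 * \<beta> * half_zeta * real N / (real N)\<^sup>2"
    using m by (simp add: divide_right_mono)
  also have "\<dots> = 2 * \<beta> * half_zeta / real N"
    using assms by (simp add: power2_eq_square)
  finally show ?thesis .
qed

definition few_cuts_rate :: "nat \<Rightarrow> real" where
  "few_cuts_rate N = (real N * sqrt (real N) + real N ^ 2 * sqrt (real N) powr (2 - s)
     + real N ^ 4 * (real N / 16) powr (- s)) / real N ^ 2"

lemma few_cuts_rate_tendsto_0: "few_cuts_rate \<longlonglongrightarrow> 0"
proof -
  have "(\<lambda>N. real N * sqrt (real N) / real N ^ 2) \<longlonglongrightarrow> 0"
    by real_asymp
  moreover have "(\<lambda>N. real N ^ 2 * sqrt (real N) powr (2 - s) / real N ^ 2) \<longlonglongrightarrow> 0"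
    using two_less_s by real_asymp
  moreover have "(\<lambda>N. real N ^ 4 * (real N / 16) powr (- s) / real N ^ 2) \<longlonglongrightarrow> 0"
    using two_less_s by real_asymp
  ultimately have "(\<lambda>N. real N * sqrt (real N) / real N ^ 2 + real N ^ 2 * sqrt (real N) powr (2 - s) / real N ^ 2
      + real N ^ 4 * (real N / 16) powr (- s) / real N ^ 2) \<longlonglongrightarrow> 0 + 0 + 0"
    by (intro tendsto_add)
  then show ?thesis
    unfolding few_cuts_rate_def by (simp add: add_divide_distrib)
qed

lemma eventually_block_len_powr_small:
  "\<forall>\<^sub>F N in sequentially. real N ^ 2 * real (block_len N) powr (- s) \<le> 1"
proof -
  have "(\<lambda>N. real N ^ 2 * (real N / 16) powr (- s)) \<longlonglongrightarrow> 0"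
    using two_less_s by real_asymp
  then have "\<forall>\<^sub>F N in sequentially. real N ^ 2 * (real N / 16) powr (- s) < 1"
    by (rule order_tendstoD) simp
  moreover have "\<forall>\<^sub>F N in sequentially. 16 \<le> N"
    by (rule eventually_ge_at_top)
  ultimately show ?thesis
  proof eventually_elim
    case (elim N)
    have "N \<le> 16 * block_len N"
      using elim unfolding block_len_def by simp
    then have "real (block_len N) powr (- s) \<le> (real N / 16) powr (- s)"
      using two_less_s elim by (intro powr_mono2') auto
    then have "real N ^ 2 * real (block_len N) powr (- s) \<le> real N ^ 2 * (real N / 16) powr (- s)"
      by (intro mult_left_mono) auto
    then show ?case
      using elim by linarith
  qed
qed

lemma prob_few_good_cuts_le_rate:
  assumes "16 \<le> N" "real N ^ 2 * real (block_len N) powr (- s) \<le> 1"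
    and "W \<subseteq> {..<N}" "card W = block_len N"
  shows "G.prob N {X. real (card {k \<in> W. good_cut N X k}) < good_prob_lb / 32 * real N}
    \<le> \<beta> / good_prob_lb * (32 / good_prob_lb)\<^sup>2 * few_cuts_rate N"
proof -
  define L where "L = real (block_len N)"
  define q where "q = good_prob_lb"
  have N: "16 \<le> real N" "1 \<le> sqrt (real N)"
    using assms(1) by simp_all
  have "N \<le> 16 * block_len N"
    using assms(1) unfolding block_len_def by simp
  then have L: "real N / 16 \<le> L"
    unfolding L_def by linarith
  have "0 < q"
    unfolding q_def by (rule good_prob_lb_pos)
  have "G.prob N {X. real (card {k \<in> W. good_cut N X k}) < q / 32 * real N}
      \<le> G.prob N {X. real (card {k \<in> W. good_cut N X k}) < L * q / 2}"
  proof (rule G.prob_mono)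
    fix X assume "X \<in> {X. real (card {k \<in> W. good_cut N X k}) < q / 32 * real N}"
    moreover have "q / 32 * real N \<le> L * q / 2"
      using L \<open>0 < q\<close> by (simp add: field_simps)
    ultimately show "X \<in> {X. real (card {k \<in> W. good_cut N X k}) < L * q / 2}"
      by simp
  qed
  also have "\<dots> \<le> \<beta> / q * (real N * sqrt (real N) + real N ^ 2 * sqrt (real N) powr (2 - s)
      + real N ^ 2 * (real N ^ 2 * L powr (- s))) / (L * q / 2)\<^sup>2"
    unfolding L_def q_def by (rule prob_few_good_cuts[OF assms N(2)])
  also have "\<dots> \<le> \<beta> / q * (real N * sqrt (real N) + real N ^ 2 * sqrt (real N) powr (2 - s)
      + real N ^ 2 * (real N ^ 2 * (real N / 16) powr (- s))) / (real N * q / 32)\<^sup>2"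
  proof (intro frac_le mult_left_mono add_mono order.refl)
    show "L powr (- s) \<le> (real N / 16) powr (- s)"
      using L N two_less_s by (intro powr_mono2') auto
    show "(real N * q / 32)\<^sup>2 \<le> (L * q / 2)\<^sup>2"
      using L N \<open>0 < q\<close> by (intro power_mono) (auto simp: field_simps)
  qed (use N \<open>0 < q\<close> beta_pos in auto)
  also have "\<dots> = \<beta> / q * (32 / q)\<^sup>2 * few_cuts_rate N"
    unfolding few_cuts_rate_def using N \<open>0 < q\<close> by (simp add: field_simps power2_eq_square power4_eq_xxxx)
  finally show ?thesis
    unfolding q_def by (simp add: mult.commute)
qed

definition regular :: "nat \<Rightarrow> (nat \<times> nat) set set" where
  "regular N = {X. good_prob_lb / 32 * real N \<le> real (card (left_cuts N X))
      \<and> good_prob_lb / 32 * real N \<le> real (card (right_cuts N X))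
      \<and> real (card X) \<le> (2 * \<beta> * half_zeta + 1) * real N}"

definition regular_error :: "nat \<Rightarrow> real" where
  "regular_error N = 2 * (\<beta> / good_prob_lb * (32 / good_prob_lb)\<^sup>2 * few_cuts_rate N)
     + 2 * \<beta> * half_zeta / real N"

lemma regular_error_tendsto_0: "regular_error \<longlonglongrightarrow> 0"
proof -
  have "regular_error \<longlonglongrightarrow> 2 * (\<beta> / good_prob_lb * (32 / good_prob_lb)\<^sup>2 * 0) + 0"
    unfolding regular_error_def by (intro tendsto_intros few_cuts_rate_tendsto_0 lim_const_over_n)
  then show ?thesis
    by simp
qed

lemma prob_regular_ge:
  assumes "16 \<le> N" "real N ^ 2 * real (block_len N) powr (- s) \<le> 1"
  shows "1 - regular_error N \<le> G.prob N (regular N)"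
proof -
  let ?q = "good_prob_lb / 32 * real N"
  let ?E\<^sub>1 = "{X. real (card {k \<in> {block_len N..<2 * block_len N}. good_cut N X k}) < ?q}"
  let ?E\<^sub>2 = "{X. real (card {k \<in> {5 * block_len N..<6 * block_len N}. good_cut N X k}) < ?q}"
  let ?E\<^sub>3 = "{X. (2 * \<beta> * half_zeta + 1) * real N \<le> real (card X)}"
  have "- regular N \<subseteq> ?E\<^sub>1 \<union> ?E\<^sub>2 \<union> ?E\<^sub>3"
    unfolding regular_def left_cuts_def right_cuts_def by auto
  then have "G.prob N (- regular N) \<le> G.prob N ?E\<^sub>1 + G.prob N ?E\<^sub>2 + G.prob N ?E\<^sub>3"
    by (meson G.prob_mono G.prob_union_le add_right_mono order.trans subsetD)
  moreover have "G.prob N ?E\<^sub>1 \<le> \<beta> / good_prob_lb * (32 / good_prob_lb)\<^sup>2 * few_cuts_rate N"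
    by (rule prob_few_good_cuts_le_rate[OF assms]) (auto simp: block_len_def)
  moreover have "G.prob N ?E\<^sub>2 \<le> \<beta> / good_prob_lb * (32 / good_prob_lb)\<^sup>2 * few_cuts_rate N"
    by (rule prob_few_good_cuts_le_rate[OF assms]) (auto simp: block_len_def)
  moreover have "G.prob N ?E\<^sub>3 \<le> 2 * \<beta> * half_zeta / real N"
    using assms by (intro prob_many_edges) simp
  ultimately show ?thesis
    using G.prob_compl[of N "regular N"] unfolding regular_error_def by linarith
qed

lemma prob_regular_tendsto_1: "(\<lambda>N. G.prob N (regular N)) \<longlonglongrightarrow> 1"
proof (rule tendsto_sandwich[OF _ _ _ tendsto_const])
  show "(\<lambda>N. 1 - regular_error N) \<longlonglongrightarrow> 1"
    using tendsto_diff[OF tendsto_const regular_error_tendsto_0, of 1] by simp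
  show "\<forall>\<^sub>F N in sequentially. 1 - regular_error N \<le> G.prob N (regular N)"
    using eventually_ge_at_top[of 16] eventually_block_len_powr_small
    by eventually_elim (rule prob_regular_ge)
qed (intro always_eventually allI G.prob_le_1)

end

theorem mainTheorem2:
  fixes s \<beta> :: real
  assumes "\<beta> > 0" and "s > 2"
  shows "\<exists>c>0. (\<lambda>N. graph_prob s \<beta> N {S. real (mixing_time N S) \<ge> c * real N ^ 2})
                  \<longlonglongrightarrow> 1"
proof -
  interpret long_range_percolation s \<beta>
    using assms by unfold_locales
  obtain c where "0 < c" and c: "\<And>N S. 16 \<le> N \<Longrightarrow> S \<subseteq> vpairs N \<Longrightarrow>
      good_prob_lb / 32 * real N \<le> real (card (left_cuts N S)) \<Longrightarrow>
      good_prob_lb / 32 * real N \<le> real (card (right_cuts N S)) \<Longrightarrow>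
      real (card S) \<le> (2 * \<beta> * half_zeta + 1) * real N \<Longrightarrow> c * real N ^ 2 \<le> real (mixing_time N S)"
    by (rule mixing_time_ge_quadratic[of "good_prob_lb / 32" "2 * \<beta> * half_zeta + 1"])
      (use good_prob_lb_pos half_zeta_nonneg beta_pos in auto)
  have "(\<lambda>N. G.prob N {S. c * real N ^ 2 \<le> real (mixing_time N S)}) \<longlonglongrightarrow> 1"
  proof (rule tendsto_sandwich[OF _ _ prob_regular_tendsto_1 tendsto_const])
    show "\<forall>\<^sub>F N in sequentially. G.prob N (regular N) \<le> G.prob N {S. c * real N ^ 2 \<le> real (mixing_time N S)}"
      using eventually_ge_at_top[of 16] by eventually_elim (auto intro!: G.prob_mono c simp: regular_def)
  qed (intro always_eventually allI G.prob_le_1)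
  then show ?thesis
    using \<open>0 < c\<close> by (auto simp: graph_prob_eq)
qed

end
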